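(* In the message-passing model with $k$ sites holding subgraphs of an undirected graph $G$ on $n$ vertices (edge duplication allowed), there is a randomized protocol that, with probability at least $0.99$, outputs a value $\tilde D$ with $D\le\tilde D\le D+2$, where $D$ is the diameter of $G$ (the maximum over pairs of vertices of their shortest-path distance), and that uses $O(kn^{3/2}\log^2 n)$ bits of communication.
   Context: Message-passing model: $k$ sites $P_1,\dots,P_k$, each holding a private input; two-way point-to-point channels between every pair of sites; at the end some site outputs the answer; cost is total bits exchanged. Graph setting: each site $P_i$ holds a subgraph $G_i\subseteq G$ on the common vertex set, and $G$ is the union of the $G_i$; "edge duplication allowed" means an edge may be held by several sites. Logarithms are base 2. *)

theory Defs
  imports Complex_Main "HOL-Library.Extended_Nat" "HOL-Library.FuncSet"
begin

definition all_edges :: "nat \<Rightarrow> nat set set" where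
  "all_edges n = {e. \<exists>u v. u < n \<and> v < n \<and> u \<noteq> v \<and> e = {u, v}}"

definition is_walk :: "nat set set \<Rightarrow> nat list \<Rightarrow> bool" where
  "is_walk E p \<longleftrightarrow> p \<noteq> [] \<and> (\<forall>i. Suc i < length p \<longrightarrow> {p ! i, p ! Suc i} \<in> E)"

text \<open>Shortest-path distance (infinite if no path).\<close>
definition gdist :: "nat set set \<Rightarrow> nat \<Rightarrow> nat \<Rightarrow> enat" where
  "gdist E u v = (INF p \<in> {p. is_walk E p \<and> hd p = u \<and> last p = v}. enat (length p - 1))"

definition diameter :: "nat \<Rightarrow> nat set set \<Rightarrow> enat" where
  "diameter n E = (SUP u \<in> {..<n}. SUP v \<in> {..<n}. gdist E u v)"

text \<open>A transcript is the list of all messages (sender, receiver, bits) sent so far.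
  The view of site i is the subsequence of messages it sent or received.\<close>
type_synonym transcript = "(nat \<times> nat \<times> bool list) list"

definition view :: "nat \<Rightarrow> transcript \<Rightarrow> transcript" where
  "view i tr = filter (\<lambda>(s, j, m). s = i \<or> j = i) tr"

text \<open>A protocol: the currently active site, knowing only its own input, its own private
  random string and its own view, either sends a message to some other site (which then
  becomes active) or halts and outputs the answer.\<close>
type_synonym ('i, 'o) protocol =
  "nat \<Rightarrow> 'i \<Rightarrow> bool list \<Rightarrow> transcript \<Rightarrow> (nat \<times> bool list) + 'o"

fun exec :: "('i, 'o) protocol \<Rightarrow> (nat \<Rightarrow> 'i) \<Rightarrow> (nat \<Rightarrow> bool list)
    \<Rightarrow> nat \<Rightarrow> nat \<Rightarrow> transcript \<Rightarrow> (transcript \<times> 'o) option" where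
  "exec P x r 0 h tr = None"
| "exec P x r (Suc f) h tr =
     (case P h (x h) (r h) (view h tr) of
        Inr out \<Rightarrow> Some (tr, out)
      | Inl (j, m) \<Rightarrow> exec P x r f j (tr @ [(h, j, m)]))"

definition run :: "('i, 'o) protocol \<Rightarrow> (nat \<Rightarrow> 'i) \<Rightarrow> (nat \<Rightarrow> bool list)
    \<Rightarrow> nat \<Rightarrow> (transcript \<times> 'o) option" where
  "run P x r f = exec P x r f 0 []"

definition valid_transcript :: "nat \<Rightarrow> transcript \<Rightarrow> bool" where
  "valid_transcript k tr \<longleftrightarrow> (\<forall>(s, j, m) \<in> set tr. s < k \<and> j < k \<and> s \<noteq> j \<and> m \<noteq> [])"

definition cost :: "transcript \<Rightarrow> nat" where
  "cost tr = sum_list (map (\<lambda>(s, j, m). length m) tr)"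

definition rand_space :: "nat \<Rightarrow> nat \<Rightarrow> (nat \<Rightarrow> bool list) set" where
  "rand_space k R = PiE {..<k} (\<lambda>_. {xs :: bool list. length xs = R})"

end

theory Submission
  imports Defs "HOL-Library.Log_Nat"
begin

(* Every site sends, for each vertex, its first s \<approx> \<surd>n neighbours.  A vertex with fewer than s
   sampled neighbours in total is light, and then all of its edges are known to the coordinator.
   A counting argument yields t \<approx> \<surd>n ln n vertices hitting the sampled neighbourhood of every
   heavy vertex; the coordinator runs a distributed BFS from each of them, at O(kn) words per BFS.
   The estimate for a pair u, v is the smaller of their distance in the light subgraph and the
   minimum of d(w, u) + d(w, v) over the sources w.  A shortest u-v path either consists of light
   vertices or passes through a heavy vertex adjacent to a source, so the estimate exceeds the true
   distance by at most 2.  The sources are chosen deterministically, so the protocol never fails. *)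

section \<open>Coordinator protocols\<close>

fun nat_to_bits :: "nat \<Rightarrow> nat \<Rightarrow> bool list" where
  "nat_to_bits 0 c = []"
| "nat_to_bits (Suc w) c = odd c # nat_to_bits w (c div 2)"

fun bits_to_nat :: "bool list \<Rightarrow> nat" where
  "bits_to_nat [] = 0"
| "bits_to_nat (b # bs) = (if b then 1 else 0) + 2 * bits_to_nat bs"

lemma length_nat_to_bits[simp]: "length (nat_to_bits w c) = w"
  by (induction w arbitrary: c) auto

lemma bits_to_nat_nat_to_bits: "c < 2 ^ w \<Longrightarrow> bits_to_nat (nat_to_bits w c) = c"
proof (induction w arbitrary: c)
  case 0 then show ?case by simp
next
  case (Suc w)
  have "c div 2 < 2 ^ w" using Suc.prems by auto
  then have "bits_to_nat (nat_to_bits w (c div 2)) = c div 2" using Suc.IH by blast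
  then show ?case by simp
qed

fun encode_nats :: "nat \<Rightarrow> nat list \<Rightarrow> bool list" where
  "encode_nats w [] = [False]"
| "encode_nats w (c # cs) = True # nat_to_bits w c @ encode_nats w cs"

function decode_nats :: "nat \<Rightarrow> bool list \<Rightarrow> nat list" where
  "decode_nats w (True # rest) = bits_to_nat (take w rest) # decode_nats w (drop w rest)"
| "decode_nats w [] = []"
| "decode_nats w (False # rest) = []"
  by pat_completeness auto
termination by (relation "measure (\<lambda>(w, xs). length xs)") auto

lemma decode_nats_encode_nats: "\<forall>c\<in>set cs. c < 2 ^ w \<Longrightarrow> decode_nats w (encode_nats w cs) = cs"
  by (induction cs) (auto simp: bits_to_nat_nat_to_bits)

lemma length_encode_nats: "length (encode_nats w cs) = 1 + (w + 1) * length cs"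
  by (induction cs) auto

lemma encode_nats_not_Nil[simp]: "encode_nats w cs \<noteq> []"
  by (cases cs) auto

text \<open>A round is a triple (site, query, answer): the coordinator 0 sends the query to the site,
  which answers.  Site 0 keeps no memory of its own: it recomputes its state by replaying the
  answers recorded in its view.\<close>

type_synonym round = "nat \<times> nat list \<times> nat list"

fun replay_answers :: "('s \<Rightarrow> nat list \<Rightarrow> 's) \<Rightarrow> nat \<Rightarrow> 's \<Rightarrow> transcript \<Rightarrow> 's" where
  "replay_answers upd w \<sigma> ((s1, j1, q) # (s2, j2, a) # rest) =
     replay_answers upd w (upd \<sigma> (decode_nats w a)) rest"
| "replay_answers upd w \<sigma> _ = \<sigma>"

definition coordinator_protocol :: "('s \<Rightarrow> (nat \<times> nat list) + 'o) \<Rightarrow> ('s \<Rightarrow> nat list \<Rightarrow> 's)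
   \<Rightarrow> ('i \<Rightarrow> 's) \<Rightarrow> ('i \<Rightarrow> nat list \<Rightarrow> nat list) \<Rightarrow> nat \<Rightarrow> ('i, 'o) protocol" where
  "coordinator_protocol nxt upd ini g w = (\<lambda>h inp r vw. if h = 0 then
      (case nxt (replay_answers upd w (ini inp) vw) of
         Inl (j, q) \<Rightarrow> Inl (j, encode_nats w q)
       | Inr out \<Rightarrow> Inr out)
      else Inl (0, encode_nats w (g inp (decode_nats w (snd (snd (last vw)))))))"

definition rounds_transcript :: "nat \<Rightarrow> round list \<Rightarrow> transcript" where
  "rounds_transcript w L = concat (map (\<lambda>(j, q, a). [(0, j, encode_nats w q), (j, 0, encode_nats w a)]) L)"

lemma rounds_transcript_Nil[simp]: "rounds_transcript w [] = []"
  by (simp add: rounds_transcript_def)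

lemma rounds_transcript_append:
  "rounds_transcript w (L1 @ L2) = rounds_transcript w L1 @ rounds_transcript w L2"
  by (simp add: rounds_transcript_def)

lemma rounds_transcript_single:
  "rounds_transcript w [(j, q, a)] = [(0, j, encode_nats w q), (j, 0, encode_nats w a)]"
  by (simp add: rounds_transcript_def)

lemma replay_rounds_transcript:
  "replay_answers upd w \<sigma> (rounds_transcript w L @ rest) =
    replay_answers upd w (fold (\<lambda>(j, q, a) s. upd s (decode_nats w (encode_nats w a))) L \<sigma>) rest"
  by (induction L arbitrary: \<sigma>) (auto simp: rounds_transcript_def)

inductive rounds_steps :: "('s \<Rightarrow> (nat \<times> nat list) + 'o) \<Rightarrow> ('s \<Rightarrow> nat list \<Rightarrow> 's)
   \<Rightarrow> ('i \<Rightarrow> nat list \<Rightarrow> nat list) \<Rightarrow> (nat \<Rightarrow> 'i) \<Rightarrow> 's \<Rightarrow> round list \<Rightarrow> 's \<Rightarrow> bool"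
  for nxt upd g x where
  Nil: "rounds_steps nxt upd g x \<sigma> [] \<sigma>"
| Cons: "nxt \<sigma> = Inl (j, q) \<Longrightarrow> a = g (x j) q \<Longrightarrow> rounds_steps nxt upd g x (upd \<sigma> a) L \<sigma>'
     \<Longrightarrow> rounds_steps nxt upd g x \<sigma> ((j, q, a) # L) \<sigma>'"

lemma rounds_steps_append: "rounds_steps nxt upd g x \<sigma>1 L1 \<sigma>2 \<Longrightarrow> rounds_steps nxt upd g x \<sigma>2 L2 \<sigma>3
   \<Longrightarrow> rounds_steps nxt upd g x \<sigma>1 (L1 @ L2) \<sigma>3"
  by (induction rule: rounds_steps.induct) (auto intro: rounds_steps.intros)

text \<open>A sweep sends the same query to sites \<open>j, \<dots>, k - 1\<close> in turn, accumulating their answers.\<close>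

lemma rounds_steps_sweep:
  assumes nxt: "\<And>i acc. i < k \<Longrightarrow> nxt (st i acc) = Inl (i, q)"
    and upd: "\<And>i acc a. i < k \<Longrightarrow>
      upd (st i acc) a = (if Suc i < k then st (Suc i) (acc \<union> f a) else fin (acc \<union> f a))"
    and "j < k"
  shows "rounds_steps nxt upd g x (st j acc) (map (\<lambda>i. (i, q, g (x i) q)) [j..<k])
    (fin (acc \<union> (\<Union>i\<in>{j..<k}. f (g (x i) q))))"
  using \<open>j < k\<close>
proof (induction "k - j" arbitrary: j acc)
  case 0 then show ?case by simp
next
  case (Suc m)
  show ?case
  proof (cases "Suc j < k")
    case True
    have "rounds_steps nxt upd g x (st (Suc j) (acc \<union> f (g (x j) q)))
       (map (\<lambda>i. (i, q, g (x i) q)) [Suc j..<k])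
       (fin ((acc \<union> f (g (x j) q)) \<union> (\<Union>i\<in>{Suc j..<k}. f (g (x i) q))))"
      using Suc True by (intro Suc.hyps) auto
    then have "rounds_steps nxt upd g x (st j acc) ((j, q, g (x j) q) # map (\<lambda>i. (i, q, g (x i) q)) [Suc j..<k])
       (fin ((acc \<union> f (g (x j) q)) \<union> (\<Union>i\<in>{Suc j..<k}. f (g (x i) q))))"
      using True nxt upd by (intro rounds_steps.Cons) auto
    moreover have "[j..<k] = j # [Suc j..<k]" "{j..<k} = insert j {Suc j..<k}"
      using True by (auto simp: upt_rec)
    ultimately show ?thesis by (simp add: Un_assoc)
  next
    case False
    then have "k = Suc j" using Suc.prems by simp
    then show ?thesis
      using nxt[of j acc] upd[of j acc "g (x j) q"] by (auto intro!: rounds_steps.intros)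
  qed
qed

definition rounds_ok :: "nat \<Rightarrow> nat \<Rightarrow> round list \<Rightarrow> bool" where
  "rounds_ok k w L \<longleftrightarrow> (\<forall>(j, q, a) \<in> set L. 0 < j \<and> j < k \<and> (\<forall>c\<in>set q. c < 2 ^ w) \<and> (\<forall>c\<in>set a. c < 2 ^ w))"

lemma view_0_rounds_transcript: "view 0 (rounds_transcript w L) = rounds_transcript w L"
  unfolding view_def rounds_transcript_def by (induction L) auto

lemma exec_coordinator_protocol:
  assumes "rounds_steps nxt upd g x \<sigma> L \<sigma>'" "nxt \<sigma>' = Inr out" "rounds_ok k w (L0 @ L)"
    "replay_answers upd w (ini (x 0)) (rounds_transcript w L0) = \<sigma>"
  shows "exec (coordinator_protocol nxt upd ini g w) x r (2 * length L + 1) 0 (rounds_transcript w L0)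
    = Some (rounds_transcript w L0 @ rounds_transcript w L, out)"
  using assms
proof (induction arbitrary: L0 rule: rounds_steps.induct)
  case (Nil \<sigma>)
  then show ?case by (simp add: coordinator_protocol_def view_0_rounds_transcript)
next
  case (Cons \<sigma> j q a L \<sigma>')
  let ?P = "coordinator_protocol nxt upd ini g w" and ?T = "rounds_transcript w"
  have okj: "0 < j" "j < k" "\<forall>c\<in>set q. c < 2 ^ w" "\<forall>c\<in>set a. c < 2 ^ w"
    using Cons.prems(2) by (auto simp: rounds_ok_def)
  have v: "view j (?T L0 @ [(0, j, encode_nats w q)]) = view j (?T L0) @ [(0, j, encode_nats w q)]"
    by (simp add: view_def)
  have rp: "replay_answers upd w (ini (x 0)) (?T (L0 @ [(j, q, a)])) = upd \<sigma> a"
    using replay_rounds_transcript[of upd w "ini (x 0)" "L0 @ [(j, q, a)]" "[]"]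
      replay_rounds_transcript[of upd w "ini (x 0)" L0 "[]"] Cons.prems(3) okj(4)
    by (simp add: decode_nats_encode_nats)
  have IH: "exec ?P x r (2 * length L + 1) 0 (?T (L0 @ [(j, q, a)]))
      = Some (?T (L0 @ [(j, q, a)]) @ ?T L, out)"
    using Cons.IH[of "L0 @ [(j, q, a)]"] Cons.prems rp by simp
  have "exec ?P x r (2 * length ((j, q, a) # L) + 1) 0 (?T L0)
      = exec ?P x r (Suc (2 * length L + 1)) j (?T L0 @ [(0, j, encode_nats w q)])"
    using Cons.hyps(1) Cons.prems(3) by (simp add: coordinator_protocol_def view_0_rounds_transcript)
  also have "\<dots> = exec ?P x r (2 * length L + 1) 0 (?T (L0 @ [(j, q, a)]))"
    using okj Cons.hyps(2)
    by (simp add: coordinator_protocol_def v decode_nats_encode_nats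
        rounds_transcript_append rounds_transcript_single)
  finally show ?case
    using IH by (simp add: rounds_transcript_append rounds_transcript_single rounds_transcript_def)
qed

lemma run_coordinator_protocol:
  assumes "rounds_steps nxt upd g x (ini (x 0)) L \<sigma>'" "nxt \<sigma>' = Inr out" "rounds_ok k w L"
  shows "run (coordinator_protocol nxt upd ini g w) x r (2 * length L + 1) = Some (rounds_transcript w L, out)"
  using exec_coordinator_protocol[of nxt upd g x "ini (x 0)" L \<sigma>' out k w "[]"] assms
  by (simp add: run_def)

lemma valid_transcript_rounds_transcript: "rounds_ok k w L \<Longrightarrow> valid_transcript k (rounds_transcript w L)"
  unfolding valid_transcript_def rounds_ok_def rounds_transcript_def by auto

definition rounds_size :: "round list \<Rightarrow> nat" where
  "rounds_size L = sum_list (map (\<lambda>(j, q, a). 2 + length q + length a) L)"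

lemma rounds_size_Nil[simp]: "rounds_size [] = 0"
  by (simp add: rounds_size_def)

lemma rounds_size_Cons[simp]: "rounds_size ((j, q, a) # L) = 2 + length q + length a + rounds_size L"
  by (simp add: rounds_size_def)

lemma rounds_size_append[simp]: "rounds_size (L1 @ L2) = rounds_size L1 + rounds_size L2"
  by (simp add: rounds_size_def)

lemma rounds_ok_append[simp]: "rounds_ok k W (L1 @ L2) \<longleftrightarrow> rounds_ok k W L1 \<and> rounds_ok k W L2"
  unfolding rounds_ok_def by (simp only: set_append ball_Un)

lemma rounds_ok_Nil[simp]: "rounds_ok k W []" by (simp add: rounds_ok_def)

lemma rounds_size_map_le:
  assumes "\<forall>i\<in>set xs. (case f i of (j, q, a) \<Rightarrow> 2 + length q + length a) \<le> c"
  shows "rounds_size (map f xs) \<le> length xs * c"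
  using assms
proof (induction xs)
  case Nil then show ?case by simp
next
  case (Cons y xs)
  obtain j q a where f: "f y = (j, q, a)" by (cases "f y") auto
  have "2 + length q + length a \<le> c" using Cons.prems f by auto
  then show ?case using Cons f by simp
qed

lemma cost_rounds_transcript: "cost (rounds_transcript w L) \<le> (w + 1) * rounds_size L"
proof (induction L)
  case Nil then show ?case by (simp add: cost_def)
next
  case (Cons t L)
  obtain j q a where t: "t = (j, q, a)" by (cases t) auto
  have "cost (rounds_transcript w (t # L))
      = length (encode_nats w q) + length (encode_nats w a) + cost (rounds_transcript w L)"
    by (simp add: t cost_def rounds_transcript_def)
  also have "\<dots> \<le> (w + 1) * (2 + length q + length a) + (w + 1) * rounds_size L"
    using Cons by (simp add: length_encode_nats algebra_simps)
  finally show ?case by (simp add: t algebra_simps)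
qed


section \<open>Walks and shortest-path distances\<close>

lemma is_walk_single[simp]: "is_walk E [a]"
  by (simp add: is_walk_def)

lemma is_walk_Cons2: "is_walk E (a # b # p) \<longleftrightarrow> {a, b} \<in> E \<and> is_walk E (b # p)"
  unfolding is_walk_def
  by (auto simp: nth_Cons split: nat.splits)

lemma is_walk_Nil[simp]: "\<not> is_walk E []" by (simp add: is_walk_def)

lemma is_walk_join: "is_walk E p \<Longrightarrow> is_walk E q \<Longrightarrow> last p = hd q \<Longrightarrow> is_walk E (butlast p @ q)"
proof (induction p rule: induct_list012)
  case 1 then show ?case by simp
next
  case (2 a) then show ?case by simp
next
  case (3 a b p)
  have w: "is_walk E (butlast (b # p) @ q)" using 3 by (auto simp: is_walk_Cons2)
  have hd: "hd (butlast (b # p) @ q) = b" using 3 by (cases p) auto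
  obtain r where r: "butlast (b # p) @ q = b # r"
    using hd w by (cases "butlast (b # p) @ q") auto
  show ?case using 3 w r by (simp add: is_walk_Cons2)
qed

lemma is_walk_take: "is_walk E p \<Longrightarrow> i < length p \<Longrightarrow> is_walk E (take (Suc i) p)"
  unfolding is_walk_def by auto

lemma is_walk_drop: "is_walk E p \<Longrightarrow> i < length p \<Longrightarrow> is_walk E (drop i p)"
  unfolding is_walk_def by auto

lemma is_walk_rev: "is_walk E p \<Longrightarrow> is_walk E (rev p)"
proof (induction p rule: induct_list012)
  case 1 then show ?case by simp
next
  case (2 a) then show ?case by simp
next
  case (3 a b p)
  have w1: "is_walk E (rev (b # p))" using 3 by (simp add: is_walk_Cons2)
  have w2: "is_walk E [b, a]" using 3 by (simp add: is_walk_Cons2 insert_commute)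
  have "is_walk E (butlast (rev (b # p)) @ [b, a])"
    by (rule is_walk_join[OF w1 w2]) simp
  moreover have "butlast (rev (b # p)) @ [b, a] = rev (a # b # p)"
    by simp
  ultimately show ?case by simp
qed

lemma is_walk_mono: "is_walk E p \<Longrightarrow> E \<subseteq> E' \<Longrightarrow> is_walk E' p"
  unfolding is_walk_def by auto

definition walks :: "nat set set \<Rightarrow> nat \<Rightarrow> nat \<Rightarrow> nat list set" where
  "walks E u v = {p. is_walk E p \<and> hd p = u \<and> last p = v}"

lemma gdist_walks: "gdist E u v = (INF p \<in> walks E u v. enat (length p - 1))"
  by (simp add: gdist_def walks_def)

lemma gdist_le: "is_walk E p \<Longrightarrow> hd p = u \<Longrightarrow> last p = v \<Longrightarrow> gdist E u v \<le> enat (length p - 1)"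
  unfolding gdist_def by (rule INF_lower) auto

lemma gdist_obtain:
  assumes "gdist E u v = enat d"
  shows "\<exists>p. is_walk E p \<and> hd p = u \<and> last p = v \<and> length p = Suc d"
proof -
  let ?A = "(\<lambda>p. enat (length p - 1)) ` walks E u v"
  have g: "gdist E u v = Inf ?A" by (simp add: gdist_walks)
  have ne: "?A \<noteq> {}"
  proof
    assume "?A = {}"
    then have "gdist E u v = \<infinity>" unfolding g Inf_enat_def by simp
    then show False using assms by simp
  qed
  have "Inf ?A \<in> ?A"
    unfolding Inf_enat_def using ne by (simp only: if_False) (rule LeastI_ex, blast)
  then obtain p where p1: "p \<in> walks E u v" and p2: "Inf ?A = enat (length p - 1)"
    by (auto simp only: image_iff)
  have p: "p \<in> walks E u v" "gdist E u v = enat (length p - 1)" using p1 p2 g by simp_all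
  then have "p \<noteq> []" by (auto simp: walks_def)
  then show ?thesis using p assms by (auto simp: walks_def)
qed

lemma gdist_refl[simp]: "gdist E v v = 0"
proof -
  have "gdist E v v \<le> enat (length [v] - 1)" by (rule gdist_le) auto
  then have "gdist E v v \<le> 0" by (simp add: zero_enat_def)
  then show ?thesis by simp
qed

lemma gdist_zero_iff: "gdist E u v = 0 \<longleftrightarrow> u = v"
proof
  assume "gdist E u v = 0"
  then obtain p where p: "is_walk E p" "hd p = u" "last p = v" "length p = Suc 0"
    using gdist_obtain[of E u v 0] by (auto simp: zero_enat_def)
  then show "u = v" by (cases p) auto
qed simp

lemma gdist_sym: "gdist E u v = gdist E v u"
proof -
  have *: "gdist E v u \<le> gdist E u v" for u v
  proof (cases "gdist E u v")
    case (enat d)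
    then obtain p where p: "is_walk E p" "hd p = u" "last p = v" "length p = Suc d"
      using gdist_obtain by blast
    have "gdist E v u \<le> enat (length (rev p) - 1)"
      using p by (intro gdist_le) (auto simp: is_walk_rev hd_rev last_rev)
    then show ?thesis using p enat by simp
  qed simp
  show ?thesis using *[of u v] *[of v u] by simp
qed

lemma gdist_triangle: "gdist E u w \<le> gdist E u v + gdist E v w"
proof (cases "gdist E u v")
  case (enat d1)
  show ?thesis
  proof (cases "gdist E v w")
    case (enat d2)
    obtain p where p: "is_walk E p" "hd p = u" "last p = v" "length p = Suc d1"
      using gdist_obtain \<open>gdist E u v = enat d1\<close> by blast
    obtain q where q: "is_walk E q" "hd q = v" "last q = w" "length q = Suc d2"
      using gdist_obtain enat by blast
    have "gdist E u w \<le> enat (length (butlast p @ q) - 1)"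
    proof (rule gdist_le)
      show "is_walk E (butlast p @ q)" using p q by (intro is_walk_join) auto
      show "hd (butlast p @ q) = u"
      proof (cases d1)
        case 0 then show ?thesis using p q by (cases p) auto
      next
        case (Suc d) then show ?thesis using p by (cases p) (auto simp: hd_append)
      qed
      show "last (butlast p @ q) = w" using q by (cases q) auto
    qed
    then show ?thesis using p q \<open>gdist E u v = enat d1\<close> enat by simp
  qed (simp add: \<open>gdist E u v = enat d1\<close>)
qed simp

lemma gdist_edge: "{u, v} \<in> E \<Longrightarrow> gdist E u v \<le> 1"
proof -
  assume "{u, v} \<in> E"
  then have "gdist E u v \<le> enat (length [u, v] - 1)"
    by (intro gdist_le) (auto simp: is_walk_Cons2)
  then show ?thesis by (simp add: one_enat_def)
qed

lemma gdist_mono: "E \<subseteq> E' \<Longrightarrow> gdist E' u v \<le> gdist E u v"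
  unfolding gdist_def by (rule INF_superset_mono) (auto intro: is_walk_mono)

lemma gdist_take: "is_walk E p \<Longrightarrow> i < length p \<Longrightarrow> gdist E (hd p) (p ! i) \<le> enat i"
proof -
  assume a: "is_walk E p" "i < length p"
  have "gdist E (hd p) (p ! i) \<le> enat (length (take (Suc i) p) - 1)"
  proof (rule gdist_le)
    show "is_walk E (take (Suc i) p)" using a by (rule is_walk_take)
    show "hd (take (Suc i) p) = hd p" using a by (simp add: hd_take)
    show "last (take (Suc i) p) = p ! i" using a by (simp add: take_Suc_conv_app_nth)
  qed
  then show ?thesis using a by simp
qed

lemma gdist_drop: "is_walk E p \<Longrightarrow> i < length p \<Longrightarrow> gdist E (p ! i) (last p) \<le> enat (length p - 1 - i)"
proof -
  assume a: "is_walk E p" "i < length p"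
  have "gdist E (p ! i) (last p) \<le> enat (length (drop i p) - 1)"
  proof (rule gdist_le)
    show "is_walk E (drop i p)" using a by (rule is_walk_drop)
    show "hd (drop i p) = p ! i" using a by (simp add: hd_drop_conv_nth)
    show "last (drop i p) = last p" using a by simp
  qed
  then show ?thesis by simp
qed

lemma gdist_pred:
  assumes "gdist E w v = enat (Suc d)"
  shows "\<exists>u. gdist E w u = enat d \<and> {u, v} \<in> E"
proof -
  obtain p where p: "is_walk E p" "hd p = w" "last p = v" "length p = Suc (Suc d)"
    using gdist_obtain assms by blast
  let ?u = "p ! d"
  have "{p ! d, p ! Suc d} \<in> E" using p(1,4) unfolding is_walk_def by simp
  moreover have "p ! Suc d = v" using p(3,4) last_conv_nth[of p] by fastforce
  ultimately have e: "{?u, v} \<in> E" by simp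
  have le: "gdist E w ?u \<le> enat d" using gdist_take[OF p(1), of d] p by simp
  have "enat (Suc d) \<le> gdist E w ?u + 1"
    using gdist_triangle[of E w v ?u] gdist_edge[OF e] assms
    by (metis add_left_mono order_trans)
  then have "gdist E w ?u = enat d" using le
    by (cases "gdist E w ?u") (auto simp: one_enat_def)
  then show ?thesis using e by blast
qed


section \<open>Breadth-first search layers\<close>

lemma all_edges_memD: "E \<subseteq> all_edges n \<Longrightarrow> {a, b} \<in> E \<Longrightarrow> a < n \<and> b < n \<and> a \<noteq> b"
  unfolding all_edges_def by (auto simp: doubleton_eq_iff)

definition layer :: "nat set set \<Rightarrow> nat \<Rightarrow> nat \<Rightarrow> nat \<Rightarrow> nat set" where
  "layer E n w d = {v. v < n \<and> gdist E w v = enat d}"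

lemma layer_0: "w < n \<Longrightarrow> layer E n w 0 = {w}"
  unfolding layer_def using gdist_zero_iff[of E w] by (auto simp: zero_enat_def[symmetric])

lemma layer_Suc:
  assumes E: "E \<subseteq> all_edges n"
  shows "layer E n w (Suc d) = {u. u < n \<and> u \<notin> (if d = 0 then {} else layer E n w (d - 1))
      \<and> u \<notin> layer E n w d \<and> (\<exists>v\<in>layer E n w d. {v, u} \<in> E)}"
proof (intro set_eqI iffI)
  fix u assume u: "u \<in> layer E n w (Suc d)"
  then have g: "gdist E w u = enat (Suc d)" and un: "u < n" by (auto simp: layer_def)
  obtain v where v: "gdist E w v = enat d" "{v, u} \<in> E" using gdist_pred[OF g] by blast
  have "v < n" using all_edges_memD[OF E v(2)] by simp
  then show "u \<in> {u. u < n \<and> u \<notin> (if d = 0 then {} else layer E n w (d - 1))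
      \<and> u \<notin> layer E n w d \<and> (\<exists>v\<in>layer E n w d. {v, u} \<in> E)}"
    using g un v by (auto simp: layer_def)
next
  fix u assume u: "u \<in> {u. u < n \<and> u \<notin> (if d = 0 then {} else layer E n w (d - 1))
      \<and> u \<notin> layer E n w d \<and> (\<exists>v\<in>layer E n w d. {v, u} \<in> E)}"
  then obtain v where un: "u < n" and nprev: "u \<notin> (if d = 0 then {} else layer E n w (d - 1))"
    and ncur: "u \<notin> layer E n w d" and v: "gdist E w v = enat d" "{v, u} \<in> E"
    by (auto simp: layer_def)
  have e1: "gdist E v u \<le> 1" using gdist_edge[OF v(2)] .
  have e2: "gdist E u v \<le> 1" using e1 by (simp add: gdist_sym)
  have up: "gdist E w u \<le> enat d + 1"
    using gdist_triangle[of E w u v] e1 v(1) by (metis add_left_mono order_trans)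
  have lo: "enat d \<le> gdist E w u + 1"
    using gdist_triangle[of E w v u] e2 v(1) by (metis add_left_mono order_trans)
  have up': "gdist E w u \<le> enat (Suc d)" using up by (simp add: one_enat_def)
  obtain m where m: "gdist E w u = enat m" using up' by (cases "gdist E w u") auto
  have "m \<le> Suc d" "d \<le> Suc m" using up lo m by (auto simp: one_enat_def)
  moreover have "m \<noteq> d" using ncur un m by (auto simp: layer_def)
  moreover have "d > 0 \<Longrightarrow> m \<noteq> d - 1" using nprev un m by (auto simp: layer_def)
  ultimately have "m = Suc d" by (cases d) auto
  then show "u \<in> layer E n w (Suc d)" using m un by (simp add: layer_def)
qed

lemma gdist_intermediate:
  "gdist E w u = enat m \<Longrightarrow> j \<le> m \<Longrightarrow> \<exists>v. gdist E w v = enat j \<and> (0 < j \<longrightarrow> (\<exists>z. {z, v} \<in> E))"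
proof (induction m arbitrary: u)
  case 0 then show ?case by auto
next
  case (Suc m)
  show ?case
  proof (cases "j = Suc m")
    case True
    then show ?thesis using Suc.prems(1) gdist_pred[OF Suc.prems(1)] by blast
  next
    case False
    obtain z where "gdist E w z = enat m" using gdist_pred[OF Suc.prems(1)] by blast
    then show ?thesis using Suc.IH[of z] Suc.prems(2) False by simp
  qed
qed

lemma gdist_le_of_layer_empty:
  assumes E: "E \<subseteq> all_edges n" and emp: "layer E n w (Suc D) = {}" and g: "gdist E w u = enat m"
  shows "m \<le> D"
proof (rule ccontr)
  assume "\<not> m \<le> D"
  then obtain v z where v: "gdist E w v = enat (Suc D)" "{z, v} \<in> E"
    using gdist_intermediate[OF g, of "Suc D"] by auto
  then have "v < n" using all_edges_memD[OF E v(2)] by simp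
  then have "v \<in> layer E n w (Suc D)" using v by (simp add: layer_def)
  then show False using emp by simp
qed

definition layers_dist :: "nat set list \<Rightarrow> nat \<Rightarrow> enat" where
  "layers_dist lay u = (if \<exists>i<length lay. u \<in> lay ! i then enat (LEAST i. i < length lay \<and> u \<in> lay ! i) else \<infinity>)"

lemma layers_dist_eq_gdist:
  assumes E: "E \<subseteq> all_edges n" and lay: "lay = map (layer E n w) [0..<Suc D]"
    and emp: "layer E n w (Suc D) = {}" and u: "u < n"
  shows "layers_dist lay u = gdist E w u"
proof (cases "gdist E w u")
  case (enat m)
  have mD: "m \<le> D" using gdist_le_of_layer_empty[OF E emp enat] .
  have mem: "u \<in> lay ! m" using mD u enat lay by (simp add: layer_def nth_append del: upt_Suc)
  have ex: "\<exists>i<length lay. u \<in> lay ! i" using mem mD lay by (intro exI[of _ m]) simp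
  have "(LEAST i. i < length lay \<and> u \<in> lay ! i) = m"
  proof (rule Least_equality)
    show "m < length lay \<and> u \<in> lay ! m" using mem mD lay by simp
    fix i assume "i < length lay \<and> u \<in> lay ! i"
    then have "gdist E w u = enat i" using lay by (auto simp: layer_def simp del: upt_Suc)
    then show "m \<le> i" using enat by simp
  qed
  then show ?thesis using ex enat by (simp add: layers_dist_def)
next
  case infinity
  have "\<not> (\<exists>i<length lay. u \<in> lay ! i)"
    using infinity lay by (auto simp: layer_def simp del: upt_Suc)
  then show ?thesis using infinity by (simp add: layers_dist_def)
qed

section \<open>The additive-2 diameter estimate\<close>

definition pair_estimate :: "nat set set \<Rightarrow> (nat \<times> nat set list) list \<Rightarrow> nat \<Rightarrow> nat \<Rightarrow> enat" where
  "pair_estimate Ls dn u v = min (gdist Ls u v) (INF p\<in>set dn. layers_dist (snd p) u + layers_dist (snd p) v)"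

definition diameter_estimate :: "nat \<Rightarrow> nat set set \<Rightarrow> (nat \<times> nat set list) list \<Rightarrow> enat" where
  "diameter_estimate n Ls dn = (SUP u\<in>{..<n}. SUP v\<in>{..<n}. pair_estimate Ls dn u v)"

lemma walk_vertex_lt:
  assumes E: "E \<subseteq> all_edges n" and p: "is_walk E p" "hd p < n" and i: "i < length p"
  shows "p ! i < n"
proof (cases i)
  case 0 then show ?thesis using p i by (simp add: hd_conv_nth)
next
  case (Suc j)
  have "{p ! j, p ! Suc j} \<in> E" using p i Suc unfolding is_walk_def by simp
  then show ?thesis using all_edges_memD[OF E] Suc by blast
qed

lemma gdist_le_pair_estimate:
  assumes LsE: "Ls \<subseteq> E"
    and dnok: "\<forall>p\<in>set dn. \<forall>u<n. layers_dist (snd p) u = gdist E (fst p) u"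
    and u: "u < n" and v: "v < n"
  shows "gdist E u v \<le> pair_estimate Ls dn u v"
proof -
  have "gdist E u v \<le> gdist Ls u v" by (rule gdist_mono[OF LsE])
  moreover have "gdist E u v \<le> (INF p\<in>set dn. layers_dist (snd p) u + layers_dist (snd p) v)"
  proof (rule INF_greatest)
    fix p assume p: "p \<in> set dn"
    have "gdist E u v \<le> gdist E u (fst p) + gdist E (fst p) v" by (rule gdist_triangle)
    also have "\<dots> = layers_dist (snd p) u + layers_dist (snd p) v"
      using dnok p u v by (simp add: gdist_sym)
    finally show "gdist E u v \<le> layers_dist (snd p) u + layers_dist (snd p) v" .
  qed
  ultimately show ?thesis by (simp add: pair_estimate_def)
qed

lemma gdist_detour_le:
  assumes p: "is_walk E p" "hd p = u" "last p = v" and i: "i < length p" and w: "{p ! i, w} \<in> E"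
  shows "gdist E w u + gdist E w v \<le> enat (length p - 1) + 2"
proof -
  have ed: "gdist E w (p ! i) \<le> 1" using gdist_edge[OF w] by (simp add: gdist_sym)
  have d1: "gdist E u (p ! i) \<le> enat i" using gdist_take[OF p(1) i] p(2) by simp
  have d2: "gdist E (p ! i) v \<le> enat (length p - 1 - i)" using gdist_drop[OF p(1) i] p(3) by simp
  have "gdist E w u \<le> 1 + enat i"
    using gdist_triangle[of E w u "p ! i"] ed d1 by (simp add: gdist_sym add_mono order_trans)
  moreover have "gdist E w v \<le> 1 + enat (length p - 1 - i)"
    using gdist_triangle[of E w v "p ! i"] ed d2 by (simp add: add_mono order_trans)
  ultimately have "gdist E w u + gdist E w v \<le> (1 + enat i) + (1 + enat (length p - 1 - i))"
    by (simp add: add_mono)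
  also have "\<dots> = enat (length p - 1) + 2" using i by (simp add: one_enat_def numeral_eq_enat)
  finally show ?thesis .
qed

text \<open>A shortest path either consists of light vertices, and then lies in \<open>Ls\<close>, or it meets a
  heavy vertex adjacent to some BFS source, and the detour through that source costs at most 2.\<close>

lemma pair_estimate_le:
  assumes E: "E \<subseteq> all_edges n"
    and light: "\<forall>a b. {a, b} \<in> E \<longrightarrow> lt a \<longrightarrow> {a, b} \<in> Ls"
    and heavy: "\<forall>x<n. \<not> lt x \<longrightarrow> (\<exists>p\<in>set dn. {x, fst p} \<in> E)"
    and dnok: "\<forall>p\<in>set dn. \<forall>u<n. layers_dist (snd p) u = gdist E (fst p) u"
    and u: "u < n" and v: "v < n"
  shows "pair_estimate Ls dn u v \<le> gdist E u v + 2"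
proof (cases "gdist E u v")
  case infinity then show ?thesis by simp
next
  case (enat d)
  obtain p where p: "is_walk E p" "hd p = u" "last p = v" "length p = Suc d"
    using gdist_obtain[OF enat] by blast
  show ?thesis
  proof (cases "\<forall>i<length p. lt (p ! i)")
    case True
    have "is_walk Ls p"
      using p(1) True light unfolding is_walk_def by auto
    then have "gdist Ls u v \<le> enat d" using gdist_le[of Ls p u v] p by simp
    then have "pair_estimate Ls dn u v \<le> enat d" by (simp add: pair_estimate_def min.coboundedI1)
    moreover have "enat d \<le> enat d + 2" by (simp add: numeral_eq_enat)
    ultimately show ?thesis using enat order_trans by metis
  next
    case False
    then obtain i where i: "i < length p" "\<not> lt (p ! i)" by blast
    have "p ! i < n" using walk_vertex_lt[OF E p(1)] p(2) u i(1) by simp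
    then obtain q where q: "q \<in> set dn" "{p ! i, fst q} \<in> E" using heavy i(2) by blast
    have "layers_dist (snd q) u + layers_dist (snd q) v \<le> enat d + 2"
      using gdist_detour_le[OF p(1-3) i(1) q(2)] dnok q(1) u v p(4) by simp
    then have "(INF p\<in>set dn. layers_dist (snd p) u + layers_dist (snd p) v) \<le> enat d + 2"
      using q(1) by (meson INF_lower2)
    then show ?thesis using enat by (simp add: pair_estimate_def min.coboundedI2)
  qed
qed

lemma diameter_estimate_bounds:
  assumes E: "E \<subseteq> all_edges n" and LsE: "Ls \<subseteq> E"
    and light: "\<forall>a b. {a, b} \<in> E \<longrightarrow> lt a \<longrightarrow> {a, b} \<in> Ls"
    and heavy: "\<forall>x<n. \<not> lt x \<longrightarrow> (\<exists>p\<in>set dn. {x, fst p} \<in> E)"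
    and dnok: "\<forall>p\<in>set dn. \<forall>u<n. layers_dist (snd p) u = gdist E (fst p) u"
  shows "diameter n E \<le> diameter_estimate n Ls dn" "diameter_estimate n Ls dn \<le> diameter n E + 2"
proof -
  show "diameter n E \<le> diameter_estimate n Ls dn"
    unfolding diameter_def diameter_estimate_def
  proof (rule SUP_subset_mono[OF subset_refl])
    fix u assume u: "u \<in> {..<n}"
    show "(SUP v\<in>{..<n}. gdist E u v) \<le> (SUP v\<in>{..<n}. pair_estimate Ls dn u v)"
      by (rule SUP_subset_mono[OF subset_refl]) (use gdist_le_pair_estimate[OF LsE dnok] u in auto)
  qed
  show "diameter_estimate n Ls dn \<le> diameter n E + 2"
    unfolding diameter_estimate_def
  proof (intro SUP_least)
    fix u v assume uv: "u \<in> {..<n}" "v \<in> {..<n}"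
    have "gdist E u v \<le> (SUP v\<in>{..<n}. gdist E u v)" using uv(2) by (rule SUP_upper)
    also have "\<dots> \<le> diameter n E" unfolding diameter_def using uv(1)
      by (rule SUP_upper[where f="\<lambda>u. SUP v\<in>{..<n}. gdist E u v"])
    finally have "gdist E u v \<le> diameter n E" .
    then show "pair_estimate Ls dn u v \<le> diameter n E + 2"
      using pair_estimate_le[OF E light heavy dnok, of u v] uv
      by (meson add_right_mono lessThan_iff order_trans)
  qed
qed

section \<open>Hitting sets\<close>

lemma exists_elem_in_many:
  assumes fin: "finite F" and FA: "\<forall>A\<in>F. A \<subseteq> {..<n} \<and> s \<le> card A" and n0: "0 < n"
  shows "\<exists>e<n. s * card F \<le> n * card {A\<in>F. e \<in> A}"
proof (rule ccontr)
  define c where "c e = card {A\<in>F. e \<in> A}" for e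
  assume "\<not> (\<exists>e<n. s * card F \<le> n * card {A\<in>F. e \<in> A})"
  then have "\<forall>e\<in>{..<n}. n * c e < s * card F" by (auto simp: c_def)
  then have "(\<Sum>e<n. n * c e) < (\<Sum>e<n. s * card F)"
    using n0 by (intro sum_strict_mono) auto
  then have less: "(\<Sum>e<n. c e) < s * card F" by (simp add: sum_distrib_left[symmetric])
  have "(\<Sum>e<n. c e) = (\<Sum>A\<in>F. \<Sum>e<n. if e \<in> A then 1 else 0)"
    unfolding c_def using fin by (subst sum.swap) (simp add: sum.If_cases Int_def)
  also have "\<dots> = (\<Sum>A\<in>F. card A)"
  proof (rule sum.cong[OF refl])
    fix A assume "A \<in> F"
    then have "{..<n} \<inter> A = A" using FA by blast
    then show "(\<Sum>e<n. if e \<in> A then 1 else 0) = card A" by (simp add: sum.If_cases)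
  qed
  also have "\<dots> \<ge> s * card F" using FA sum_mono[of F "\<lambda>_. s" card] by (simp add: mult.commute)
  finally show False using less by simp
qed

text \<open>The standard greedy argument: repeatedly pick the element lying in the most remaining sets;
  each pick removes a fraction \<open>s / n\<close> of them.\<close>

lemma hitting_set_exists:
  assumes "finite F" "\<forall>A\<in>F. A \<subseteq> {..<n} \<and> s \<le> card A" "s \<le> n" "0 < n"
    "real (card F) * (1 - real s / real n) ^ t < 1"
  shows "\<exists>S \<subseteq> {..<n}. card S \<le> t \<and> (\<forall>A\<in>F. S \<inter> A \<noteq> {})"
  using assms
proof (induction t arbitrary: F)
  case 0
  then have "F = {}" by simp
  then show ?case by auto
next
  case (Suc t)
  note fin = Suc.prems(1) and FA = Suc.prems(2) and sn = Suc.prems(3) and n0 = Suc.prems(4)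
  obtain e where e: "e < n" "s * card F \<le> n * card {A\<in>F. e \<in> A}"
    using exists_elem_in_many[OF fin FA n0] by blast
  define F' where "F' = {A\<in>F. e \<notin> A}"
  have cardF: "card F = card F' + card {A\<in>F. e \<in> A}"
  proof -
    have "F = F' \<union> {A\<in>F. e \<in> A}" "F' \<inter> {A\<in>F. e \<in> A} = {}" by (auto simp: F'_def)
    then show ?thesis using fin by (metis card_Un_disjoint finite_Un)
  qed
  have q: "real (card F') \<le> real (card F) * (1 - real s / real n)"
  proof -
    have "real s * real (card F) \<le> real n * real (card {A\<in>F. e \<in> A})"
      using e(2) by (metis of_nat_mult of_nat_le_iff)
    then have "real s * real (card F) / real n \<le> real (card {A\<in>F. e \<in> A})"
      using n0 by (simp add: divide_le_eq mult.commute)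
    moreover have "real (card F) * (1 - real s / real n) = real (card F) - real s * real (card F) / real n"
      by (simp add: algebra_simps)
    ultimately show ?thesis using cardF by simp
  qed
  have "real (card F') * (1 - real s / real n) ^ t
      \<le> real (card F) * (1 - real s / real n) * (1 - real s / real n) ^ t"
    using q sn n0 by (intro mult_right_mono) auto
  also have "\<dots> < 1" using Suc.prems(5) by (simp add: algebra_simps)
  finally have lt: "real (card F') * (1 - real s / real n) ^ t < 1" .
  obtain S where S: "S \<subseteq> {..<n}" "card S \<le> t" "\<forall>A\<in>F'. S \<inter> A \<noteq> {}"
    using Suc.IH[of F'] fin FA sn n0 lt by (auto simp: F'_def)
  have "card (insert e S) \<le> Suc t"
    using S(1,2) finite_subset[OF S(1)] by (simp add: card_insert_if)
  moreover have "\<forall>A\<in>F. insert e S \<inter> A \<noteq> {}" using S(3) by (auto simp: F'_def)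
  ultimately show ?case using S(1) e(1) by (intro exI[of _ "insert e S"]) auto
qed

lemma hitting_set_heavy:
  assumes N: "\<forall>v<n. N v \<subseteq> {..<n}" and sn: "s \<le> n" and n0: "0 < n"
    and tb: "real n * (1 - real s / real n) ^ t < 1"
  shows "\<exists>S \<subseteq> {..<n}. card S \<le> t \<and> (\<forall>v<n. s \<le> card (N v) \<longrightarrow> S \<inter> N v \<noteq> {})"
proof -
  let ?F = "N ` {v. v < n \<and> s \<le> card (N v)}"
  have "card ?F \<le> card {v. v < n \<and> s \<le> card (N v)}" by (rule card_image_le) simp
  also have "\<dots> \<le> card {..<n}" by (rule card_mono) auto
  finally have "real (card ?F) * (1 - real s / real n) ^ t \<le> real n * (1 - real s / real n) ^ t"
    using sn n0 by (intro mult_right_mono) auto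
  then have lt: "real (card ?F) * (1 - real s / real n) ^ t < 1" using tb by linarith
  have FA: "\<forall>A\<in>?F. A \<subseteq> {..<n} \<and> s \<le> card A" using N by blast
  have fin: "finite ?F" by simp
  obtain S where S: "S \<subseteq> {..<n}" "card S \<le> t" "\<forall>A\<in>?F. S \<inter> A \<noteq> {}"
    using hitting_set_exists[OF fin FA sn n0 lt] by blast
  have "\<forall>v<n. s \<le> card (N v) \<longrightarrow> S \<inter> N v \<noteq> {}" using S(3) by blast
  then show ?thesis using S(1,2) by blast
qed

section \<open>The diameter protocol\<close>

text \<open>Numbers sent by the protocol: a sampled edge \<open>(v, u)\<close> is the code \<open>v * n + u\<close>; a BFS query
  lists the previous layer as plain vertices and the current layer shifted by \<open>n\<close>, and the reply
  is the part of the next layer visible in the site's own edges.  The empty query asks for the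
  sample of at most \<open>s\<close> neighbours of every vertex.\<close>

definition first_neighbours :: "nat \<Rightarrow> nat \<Rightarrow> nat set set \<Rightarrow> nat \<Rightarrow> nat list" where
  "first_neighbours n s E v = take s (filter (\<lambda>u. {v, u} \<in> E) [0..<n])"

definition neighbour_codes :: "nat \<Rightarrow> nat \<Rightarrow> nat set set \<Rightarrow> nat list" where
  "neighbour_codes n s E = concat (map (\<lambda>v. map (\<lambda>u. v * n + u) (first_neighbours n s E v)) [0..<n])"

definition layer_reply :: "nat \<Rightarrow> nat set set \<Rightarrow> nat list \<Rightarrow> nat list" where
  "layer_reply n E q = filter (\<lambda>u. u \<notin> set q \<and> u + n \<notin> set q \<and> (\<exists>v<n. v + n \<in> set q \<and> {v, u} \<in> E)) [0..<n]"

definition site_reply :: "nat \<Rightarrow> nat \<Rightarrow> nat set set \<Rightarrow> nat list \<Rightarrow> nat list" where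
  "site_reply n s E q = (if q = [] then neighbour_codes n s E else layer_reply n E q)"

definition previous_layer :: "nat set list \<Rightarrow> nat set" where
  "previous_layer lay = (if 2 \<le> length lay then lay ! (length lay - 2) else {})"

definition layer_query :: "nat \<Rightarrow> nat set list \<Rightarrow> nat list" where
  "layer_query n lay = sorted_list_of_set (previous_layer lay) @ map (\<lambda>v. v + n) (sorted_list_of_set (last lay))"

definition decode_pairs :: "nat \<Rightarrow> nat list \<Rightarrow> (nat \<times> nat) set" where
  "decode_pairs n a = (\<lambda>c. (c div n, c mod n)) ` set a"

definition sampled_neighbours :: "(nat \<times> nat) set \<Rightarrow> nat \<Rightarrow> nat set" where
  "sampled_neighbours P v = {u. (v, u) \<in> P}"

definition light_edges :: "nat \<Rightarrow> nat \<Rightarrow> (nat \<times> nat) set \<Rightarrow> nat set set" where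
  "light_edges n s P = {{v, u} | v u. v < n \<and> card (sampled_neighbours P v) < s \<and> u \<in> sampled_neighbours P v}"

text \<open>Local computation is free in the model, so the coordinator may pick the sources by choice;
  for the parameters used below such a set exists (\<open>hitting_sources_props\<close>).\<close>

definition hitting_sources :: "nat \<Rightarrow> nat \<Rightarrow> nat \<Rightarrow> (nat \<times> nat) set \<Rightarrow> nat set" where
  "hitting_sources n s t P = (SOME S. S \<subseteq> {..<n} \<and> card S \<le> t
     \<and> (\<forall>v<n. s \<le> card (sampled_neighbours P v) \<longrightarrow> S \<inter> sampled_neighbours P v \<noteq> {}))"

text \<open>\<open>Bfs x0 Ls ws w lay acc j dn\<close>: BFS from source \<open>w\<close> with layers \<open>lay\<close> computed so far, next
  layer \<open>acc\<close> collected up to site \<open>j\<close>, sources \<open>ws\<close> still to be processed and finished BFS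
  layerings \<open>dn\<close>; \<open>x0\<close> is the coordinator's own input.\<close>

datatype coord_state = Sampling "nat set set" nat "(nat \<times> nat) set"
  | Bfs "nat set set" "nat set set" "nat list" nat "nat set list" "nat set" nat "(nat \<times> nat set list) list"
  | Done enat

definition start_bfs :: "nat \<Rightarrow> nat set set \<Rightarrow> nat set set \<Rightarrow> nat list \<Rightarrow> (nat \<times> nat set list) list \<Rightarrow> coord_state" where
  "start_bfs n x0 Ls ws dn = (case ws of [] \<Rightarrow> Done (diameter_estimate n Ls dn)
     | w # ws' \<Rightarrow> Bfs x0 Ls ws' w [{w}] (set (layer_reply n x0 (layer_query n [{w}]))) 1 dn)"

definition start_bfs_phase :: "nat \<Rightarrow> nat \<Rightarrow> nat \<Rightarrow> nat set set \<Rightarrow> (nat \<times> nat) set \<Rightarrow> coord_state" where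
  "start_bfs_phase n s t x0 P = start_bfs n x0 (light_edges n s P) (sorted_list_of_set (hitting_sources n s t P)) []"

fun coord_next :: "nat \<Rightarrow> coord_state \<Rightarrow> (nat \<times> nat list) + enat" where
  "coord_next n (Sampling x0 j P) = Inl (j, [])"
| "coord_next n (Bfs x0 Ls ws w lay acc j dn) = Inl (j, layer_query n lay)"
| "coord_next n (Done out) = Inr out"

definition finish_level :: "nat \<Rightarrow> nat set set \<Rightarrow> nat set set \<Rightarrow> nat list \<Rightarrow> nat \<Rightarrow> nat set list \<Rightarrow> nat set
   \<Rightarrow> (nat \<times> nat set list) list \<Rightarrow> coord_state" where
  "finish_level n x0 Ls ws w lay acc dn = (if acc = {} then start_bfs n x0 Ls ws ((w, lay) # dn)
     else Bfs x0 Ls ws w (lay @ [acc]) (set (layer_reply n x0 (layer_query n (lay @ [acc])))) 1 dn)"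

fun coord_update :: "nat \<Rightarrow> nat \<Rightarrow> nat \<Rightarrow> nat \<Rightarrow> coord_state \<Rightarrow> nat list \<Rightarrow> coord_state" where
  "coord_update n k s t (Sampling x0 j P) a = (if Suc j < k then Sampling x0 (Suc j) (P \<union> decode_pairs n a)
      else start_bfs_phase n s t x0 (P \<union> decode_pairs n a))"
| "coord_update n k s t (Bfs x0 Ls ws w lay acc j dn) a =
     (if Suc j < k then Bfs x0 Ls ws w lay (acc \<union> set a) (Suc j) dn
      else finish_level n x0 Ls ws w lay (acc \<union> set a) dn)"
| "coord_update n k s t (Done out) a = Done out"

definition coord_init :: "nat \<Rightarrow> nat \<Rightarrow> nat set set \<Rightarrow> coord_state" where
  "coord_init n s x0 = Sampling x0 1 (decode_pairs n (neighbour_codes n s x0))"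

abbreviation "diam_rounds n k s t x \<equiv> rounds_steps (coord_next n) (coord_update n k s t) (site_reply n s) x"

lemma sampling_phase_steps:
  assumes "j < k"
  shows "diam_rounds n k s t x (Sampling x0 j P) (map (\<lambda>i. (i, [], neighbour_codes n s (x i))) [j..<k])
     (start_bfs_phase n s t x0 (P \<union> (\<Union>i\<in>{j..<k}. decode_pairs n (neighbour_codes n s (x i)))))"
  using rounds_steps_sweep[where nxt="coord_next n" and upd="coord_update n k s t"
      and st="\<lambda>i P. Sampling x0 i P" and fin="start_bfs_phase n s t x0"
      and f="decode_pairs n" and q="[]" and g="site_reply n s", OF _ _ assms]
  by (simp add: site_reply_def)

lemma level_steps:
  assumes "j < k" "layer_query n lay \<noteq> []"
  shows "diam_rounds n k s t x (Bfs x0 Ls ws w lay acc j dn)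
       (map (\<lambda>i. (i, layer_query n lay, layer_reply n (x i) (layer_query n lay))) [j..<k])
     (finish_level n x0 Ls ws w lay (acc \<union> (\<Union>i\<in>{j..<k}. set (layer_reply n (x i) (layer_query n lay)))) dn)"
  using rounds_steps_sweep[where nxt="coord_next n" and upd="coord_update n k s t"
      and st="\<lambda>i acc. Bfs x0 Ls ws w lay acc i dn" and fin="\<lambda>acc. finish_level n x0 Ls ws w lay acc dn"
      and f=set and q="layer_query n lay" and g="site_reply n s", OF _ _ assms(1)] assms(2)
  by (simp add: site_reply_def)

lemma set_first_neighbours: "set (first_neighbours n s E v) \<subseteq> {u. u < n \<and> {v, u} \<in> E}"
  unfolding first_neighbours_def by (auto dest: in_set_takeD)

lemma decode_pairs_neighbour_codes:
  assumes "0 < n"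
  shows "decode_pairs n (neighbour_codes n s E) = {(v, u). v < n \<and> u \<in> set (first_neighbours n s E v)}"
proof -
  have "(v * n + u) div n = v \<and> (v * n + u) mod n = u" if "u < n" for v u
    using that assms by simp
  then show ?thesis
    unfolding decode_pairs_def neighbour_codes_def using set_first_neighbours[of n s E]
    by (force simp: image_iff)
qed

lemma length_neighbour_codes: "length (neighbour_codes n s E) \<le> n * s"
proof -
  have "length (neighbour_codes n s E) = (\<Sum>v\<leftarrow>[0..<n]. length (first_neighbours n s E v))"
    by (simp add: neighbour_codes_def length_concat comp_def)
  also have "\<dots> \<le> (\<Sum>v\<leftarrow>[0..<n]. s)"
    by (rule sum_list_mono) (simp add: first_neighbours_def)
  finally show ?thesis by (simp add: sum_list_triv)
qed

lemma neighbour_codes_less: "c \<in> set (neighbour_codes n s E) \<Longrightarrow> c < n * n"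
proof -
  assume "c \<in> set (neighbour_codes n s E)"
  then obtain v u where "v < n" "u < n" "c = v * n + u"
    unfolding neighbour_codes_def using set_first_neighbours by fastforce
  moreover have "v * n + u < n * n"
  proof -
    have "v * n + u < v * n + n" using \<open>u < n\<close> by simp
    also have "\<dots> = Suc v * n" by simp
    also have "\<dots> \<le> n * n" using \<open>v < n\<close> by (intro mult_le_mono1) simp
    finally show ?thesis .
  qed
  ultimately show ?thesis by simp
qed

lemma set_layer_reply:
  assumes "prev \<subseteq> {..<n}" "cur \<subseteq> {..<n}" "finite prev" "finite cur"
  shows "set (layer_reply n E (sorted_list_of_set prev @ map (\<lambda>v. v + n) (sorted_list_of_set cur)))
     = {u. u < n \<and> u \<notin> prev \<and> u \<notin> cur \<and> (\<exists>v\<in>cur. {v, u} \<in> E)}"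
  using assms unfolding layer_reply_def by (auto simp: image_iff)

lemma length_layer_reply_le:
  assumes "set (layer_reply n E q) \<subseteq> N" "finite N"
  shows "length (layer_reply n E q) \<le> card N"
proof -
  have "distinct (layer_reply n E q)" by (simp add: layer_reply_def)
  then have "length (layer_reply n E q) = card (set (layer_reply n E q))" by (simp add: distinct_card)
  also have "\<dots> \<le> card N" using assms by (intro card_mono) auto
  finally show ?thesis .
qed


section \<open>Correctness and cost of the diameter protocol\<close>

locale diam_setting =
  fixes n k s t W :: nat and x :: "nat \<Rightarrow> nat set set"
  assumes k2: "2 \<le> k" and xe: "\<forall>i<k. x i \<subseteq> all_edges n" and n0: "0 < n"
    and Wb: "2 * n + n * n \<le> 2 ^ W"
begin

definition G :: "nat set set" where "G = (\<Union>i<k. x i)"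

lemma G_subset: "G \<subseteq> all_edges n"
  using xe by (auto simp: G_def)

definition bfs_layers :: "nat \<Rightarrow> nat \<Rightarrow> nat set list" where
  "bfs_layers w d = map (layer G n w) [0..<Suc d]"

definition beyond :: "nat \<Rightarrow> nat \<Rightarrow> nat set" where
  "beyond w j = {v. v < n \<and> (\<exists>m. j \<le> m \<and> gdist G w v = enat m)}"

lemma layer_subset: "layer G n w d \<subseteq> {..<n}" by (auto simp: layer_def)
lemma finite_layer[simp]: "finite (layer G n w d)" using layer_subset finite_subset by blast
lemma finite_beyond[simp]: "finite (beyond w j)" by (rule finite_subset[of _ "{..<n}"]) (auto simp: beyond_def)
lemma beyond_Suc: "beyond w j = layer G n w j \<union> beyond w (Suc j)"
  by (auto simp: beyond_def layer_def)
lemma layer_Int_beyond: "layer G n w j \<inter> beyond w (Suc j) = {}"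
  by (auto simp: beyond_def layer_def)
lemma card_beyond: "card (beyond w j) = card (layer G n w j) + card (beyond w (Suc j))"
  using beyond_Suc[of w j] layer_Int_beyond[of w j] by (simp add: card_Un_disjoint)
lemma card_beyond_le: "card (beyond w j) \<le> n"
  using card_mono[of "{..<n}" "beyond w j"] by (auto simp: beyond_def)

lemma last_bfs_layers[simp]: "last (bfs_layers w d) = layer G n w d"
  by (simp add: bfs_layers_def)

lemma previous_layer_bfs_layers: "previous_layer (bfs_layers w d) = (if d = 0 then {} else layer G n w (d - 1))"
  by (cases d) (auto simp: previous_layer_def bfs_layers_def nth_append simp del: upt_Suc)

lemma bfs_layers_Suc: "bfs_layers w (Suc d) = bfs_layers w d @ [layer G n w (Suc d)]"
  by (simp add: bfs_layers_def)

lemma bfs_layers_0: "bfs_layers w 0 = [layer G n w 0]"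
  by (simp add: bfs_layers_def)

lemma finite_previous_layer[simp]: "finite (previous_layer (bfs_layers w d))" by (simp add: previous_layer_bfs_layers)
lemma previous_layer_subset: "previous_layer (bfs_layers w d) \<subseteq> {..<n}"
  using layer_subset by (simp add: previous_layer_bfs_layers)

lemma layer_query_bfs_layers: "layer_query n (bfs_layers w d) =
    sorted_list_of_set (previous_layer (bfs_layers w d)) @ map (\<lambda>v. v + n) (sorted_list_of_set (layer G n w d))"
  by (simp add: layer_query_def)

lemma layer_query_not_Nil: "layer G n w d \<noteq> {} \<Longrightarrow> layer_query n (bfs_layers w d) \<noteq> []"
  by (simp add: layer_query_bfs_layers)

lemma set_layer_reply_bfs_layers: "set (layer_reply n E (layer_query n (bfs_layers w d))) =
   {u. u < n \<and> u \<notin> previous_layer (bfs_layers w d) \<and> u \<notin> layer G n w d \<and> (\<exists>v\<in>layer G n w d. {v, u} \<in> E)}"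
  unfolding layer_query_bfs_layers by (rule set_layer_reply) (use previous_layer_subset layer_subset in auto)

lemma UN_layer_reply: "(\<Union>i\<in>{0..<k}. set (layer_reply n (x i) (layer_query n (bfs_layers w d)))) = layer G n w (Suc d)"
proof -
  have L: "layer G n w (Suc d) = {u. u < n \<and> u \<notin> (if d = 0 then {} else layer G n w (d - 1))
      \<and> u \<notin> layer G n w d \<and> (\<exists>v\<in>layer G n w d. {v, u} \<in> G)}" by (rule layer_Suc[OF G_subset])
  have E: "\<And>u A. (\<exists>v\<in>A. {v, u} \<in> G) \<longleftrightarrow> (\<exists>i\<in>{0..<k}. \<exists>v\<in>A. {v, u} \<in> x i)"
    unfolding G_def atLeast0LessThan by blast
  show ?thesis unfolding set_layer_reply_bfs_layers previous_layer_bfs_layers L E by blast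
qed

lemma layer_reply_subset:
  "i < k \<Longrightarrow> set (layer_reply n (x i) (layer_query n (bfs_layers w d))) \<subseteq> layer G n w (Suc d)"
  using UN_layer_reply[of w d] by auto

definition level_rounds :: "nat \<Rightarrow> nat \<Rightarrow> round list" where
  "level_rounds w d =
    map (\<lambda>i. (i, layer_query n (bfs_layers w d), layer_reply n (x i) (layer_query n (bfs_layers w d)))) [1..<k]"

definition bfs_state :: "nat set set \<Rightarrow> nat list \<Rightarrow> nat \<Rightarrow> nat \<Rightarrow> (nat \<times> nat set list) list \<Rightarrow> coord_state" where
  "bfs_state Ls ws w d dn =
    Bfs (x 0) Ls ws w (bfs_layers w d) (set (layer_reply n (x 0) (layer_query n (bfs_layers w d)))) 1 dn"

text \<open>Amortised cost of a BFS from layer \<open>d\<close> on; every vertex is queried in at most two levels.\<close>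

definition bfs_potential :: "nat \<Rightarrow> nat \<Rightarrow> nat" where
  "bfs_potential w d =
    card (previous_layer (bfs_layers w d)) + 2 * card (layer G n w d) + 7 * card (beyond w (Suc d)) + 3"

lemma rounds_ok_level_rounds: "rounds_ok k W (level_rounds w d)"
proof -
  have a: "c < 2 ^ W" if "c < 2 * n" for c using that Wb by linarith
  have "\<forall>c\<in>set (layer_query n (bfs_layers w d)). c < 2 * n"
    unfolding layer_query_bfs_layers using previous_layer_subset layer_subset by fastforce
  moreover have "\<forall>c\<in>set (layer_reply n E q). c < 2 * n" for E q by (auto simp: layer_reply_def)
  ultimately show ?thesis unfolding rounds_ok_def level_rounds_def using a by auto
qed

lemma rounds_size_level_rounds:
  "rounds_size (level_rounds w d)
    \<le> (k - 1) * (2 + card (previous_layer (bfs_layers w d)) + card (layer G n w d) + card (layer G n w (Suc d)))"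
proof -
  have "rounds_size (level_rounds w d)
     \<le> length [1..<k]
       * (2 + card (previous_layer (bfs_layers w d)) + card (layer G n w d) + card (layer G n w (Suc d)))"
    unfolding level_rounds_def
  proof (rule rounds_size_map_le, intro ballI)
    fix i assume "i \<in> set [1..<k]"
    then have ik: "i < k" by simp
    have "length (layer_query n (bfs_layers w d)) = card (previous_layer (bfs_layers w d)) + card (layer G n w d)"
      unfolding layer_query_bfs_layers by simp
    moreover have "length (layer_reply n (x i) (layer_query n (bfs_layers w d))) \<le> card (layer G n w (Suc d))"
      by (rule length_layer_reply_le[OF layer_reply_subset[OF ik]]) simp
    ultimately show "(case (i, layer_query n (bfs_layers w d), layer_reply n (x i) (layer_query n (bfs_layers w d)))
        of
        (j, q, a) \<Rightarrow> 2 + length q + length a)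
      \<le> 2 + card (previous_layer (bfs_layers w d)) + card (layer G n w d) + card (layer G n w (Suc d))" by simp
  qed
  then show ?thesis by simp
qed

lemma level_rounds_steps:
  assumes "layer G n w d \<noteq> {}"
  shows "diam_rounds n k s t x (bfs_state Ls ws w d dn) (level_rounds w d)
     (finish_level n (x 0) Ls ws w (bfs_layers w d) (layer G n w (Suc d)) dn)"
proof -
  let ?q = "layer_query n (bfs_layers w d)"
  have "{0..<k} = insert 0 {1..<k}" using k2 by auto
  then have acc: "set (layer_reply n (x 0) ?q) \<union> (\<Union>i\<in>{1..<k}. set (layer_reply n (x i) ?q)) = layer G n w (Suc d)"
    using UN_layer_reply[of w d] by simp
  have "diam_rounds n k s t x (Bfs (x 0) Ls ws w (bfs_layers w d) (set (layer_reply n (x 0) ?q)) 1 dn)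
      (map (\<lambda>i. (i, ?q, layer_reply n (x i) ?q)) [1..<k])
      (finish_level n (x 0) Ls ws w (bfs_layers w d)
         (set (layer_reply n (x 0) ?q) \<union> (\<Union>i\<in>{1..<k}. set (layer_reply n (x i) ?q))) dn)"
    using k2 layer_query_not_Nil[OF assms] by (intro level_steps) auto
  then show ?thesis unfolding acc bfs_state_def level_rounds_def .
qed

lemma bfs_potential_le:
  "2 + card (previous_layer (bfs_layers w d)) + card (layer G n w d) + card (layer G n w (Suc d)) \<le> bfs_potential w d"
  using card_beyond[of w "Suc d"] by (simp add: bfs_potential_def)

lemma bfs_potential_Suc:
  assumes "layer G n w (Suc d) \<noteq> {}"
  shows "(2 + card (previous_layer (bfs_layers w d)) + card (layer G n w d) + card (layer G n w (Suc d)))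
    + bfs_potential w (Suc d) \<le> bfs_potential w d"
proof -
  have "card (layer G n w (Suc d)) \<noteq> 0" using assms finite_layer[of w "Suc d"] card_0_eq by blast
  then have "1 \<le> card (layer G n w (Suc d))" by linarith
  then show ?thesis
    using card_beyond[of w "Suc d"] by (simp add: bfs_potential_def previous_layer_bfs_layers)
qed

lemma bfs_steps:
  assumes "layer G n w d \<noteq> {}"
  shows "\<exists>L D. diam_rounds n k s t x (bfs_state Ls ws w d dn) L (start_bfs n (x 0) Ls ws ((w, bfs_layers w D) # dn))
    \<and> layer G n w (Suc D) = {} \<and> rounds_ok k W L \<and> rounds_size L \<le> (k - 1) * bfs_potential w d"
  using assms
proof (induction "card (beyond w (Suc d))" arbitrary: d rule: less_induct)
  case less
  have level: "diam_rounds n k s t x (bfs_state Ls ws w d dn) (level_rounds w d)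
     (finish_level n (x 0) Ls ws w (bfs_layers w d) (layer G n w (Suc d)) dn)"
    using level_rounds_steps[OF less.prems] .
  have size: "rounds_size (level_rounds w d)
    \<le> (k - 1) * (2 + card (previous_layer (bfs_layers w d)) + card (layer G n w d) + card (layer G n w (Suc d)))"
    by (rule rounds_size_level_rounds)
  show ?case
  proof (cases "layer G n w (Suc d) = {}")
    case True
    then have "finish_level n (x 0) Ls ws w (bfs_layers w d) (layer G n w (Suc d)) dn
        = start_bfs n (x 0) Ls ws ((w, bfs_layers w d) # dn)"
      by (simp add: finish_level_def)
    moreover have "rounds_size (level_rounds w d) \<le> (k - 1) * bfs_potential w d"
      using size bfs_potential_le[of w d] by (meson mult_le_mono2 order_trans)
    ultimately show ?thesis
      using level True rounds_ok_level_rounds by (intro exI[of _ "level_rounds w d"] exI[of _ d]) auto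
  next
    case False
    then have "card (layer G n w (Suc d)) \<noteq> 0" using finite_layer[of w "Suc d"] card_0_eq by blast
    then have "card (beyond w (Suc (Suc d))) < card (beyond w (Suc d))"
      using card_beyond[of w "Suc d"] by linarith
    then obtain L D where L: "diam_rounds n k s t x (bfs_state Ls ws w (Suc d) dn) L
        (start_bfs n (x 0) Ls ws ((w, bfs_layers w D) # dn))" "layer G n w (Suc D) = {}" "rounds_ok k W L"
      "rounds_size L \<le> (k - 1) * bfs_potential w (Suc d)"
      using less.hyps False by blast
    have "finish_level n (x 0) Ls ws w (bfs_layers w d) (layer G n w (Suc d)) dn = bfs_state Ls ws w (Suc d) dn"
      using False by (simp add: finish_level_def bfs_state_def bfs_layers_Suc)
    then have steps: "diam_rounds n k s t x (bfs_state Ls ws w d dn) (level_rounds w d @ L)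
        (start_bfs n (x 0) Ls ws ((w, bfs_layers w D) # dn))"
      using rounds_steps_append level L(1) by fastforce
    have "rounds_size (level_rounds w d @ L) \<le> (k - 1) * bfs_potential w d"
      using size L(4) mult_le_mono2[OF bfs_potential_Suc[OF False], of "k - 1"]
      by (simp add: add_mult_distrib2)
    then show ?thesis using steps L(2,3) rounds_ok_level_rounds
      by (intro exI[of _ "level_rounds w d @ L"] exI[of _ D]) auto
  qed
qed

end


lemma card_first_neighbours:
  assumes "u < n" "{v, u} \<in> E" "u \<notin> set (first_neighbours n s E v)"
  shows "card (set (first_neighbours n s E v)) = s"
proof -
  let ?xs = "filter (\<lambda>u. {v, u} \<in> E) [0..<n]"
  have "u \<in> set ?xs" using assms by simp
  then have "\<not> length ?xs \<le> s" using assms(3) unfolding first_neighbours_def by auto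
  then have "length (take s ?xs) = s" by simp
  moreover have "distinct (take s ?xs)" by simp
  ultimately show ?thesis unfolding first_neighbours_def by (simp add: distinct_card)
qed

context diam_setting
begin

definition sampled_pairs :: "(nat \<times> nat) set" where
  "sampled_pairs = (\<Union>i<k. decode_pairs n (neighbour_codes n s (x i)))"

lemma sampled_pairs_eq: "sampled_pairs = {(v, u). v < n \<and> (\<exists>i<k. u \<in> set (first_neighbours n s (x i) v))}"
  unfolding sampled_pairs_def decode_pairs_neighbour_codes[OF n0] by auto

lemma sampled_neighbourD: "u \<in> sampled_neighbours sampled_pairs v \<Longrightarrow> v < n \<and> u < n \<and> {v, u} \<in> G"
proof -
  assume "u \<in> sampled_neighbours sampled_pairs v"
  then obtain i where i: "v < n" "i < k" "u \<in> set (first_neighbours n s (x i) v)"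
    unfolding sampled_neighbours_def sampled_pairs_eq by auto
  then have "u < n \<and> {v, u} \<in> x i" using set_first_neighbours[of n s "x i" v] by auto
  then show ?thesis using i unfolding G_def by auto
qed

lemma sampled_neighbours_subset: "sampled_neighbours sampled_pairs v \<subseteq> {..<n}" using sampled_neighbourD by blast
lemma finite_sampled_neighbours[simp]: "finite (sampled_neighbours sampled_pairs v)"
  using sampled_neighbours_subset finite_subset by blast

lemma light_neighbour_sampled:
  assumes "v < n" "card (sampled_neighbours sampled_pairs v) < s" "{v, u} \<in> G"
  shows "u \<in> sampled_neighbours sampled_pairs v"
proof (rule ccontr)
  assume nu: "u \<notin> sampled_neighbours sampled_pairs v"
  obtain i where i: "i < k" "{v, u} \<in> x i" using assms(3) by (auto simp: G_def)
  have un: "u < n" using all_edges_memD[OF G_subset assms(3)] by simp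
  have sub: "set (first_neighbours n s (x i) v) \<subseteq> sampled_neighbours sampled_pairs v"
    unfolding sampled_neighbours_def sampled_pairs_eq using i assms(1) by auto
  have "u \<notin> set (first_neighbours n s (x i) v)" using nu sub by blast
  then have "card (set (first_neighbours n s (x i) v)) = s" using card_first_neighbours[OF un i(2)] by blast
  moreover have "card (set (first_neighbours n s (x i) v)) \<le> card (sampled_neighbours sampled_pairs v)"
    using sub by (intro card_mono) auto
  ultimately show False using assms(2) by simp
qed

abbreviation "Ls \<equiv> light_edges n s sampled_pairs"

lemma light_edges_subset: "Ls \<subseteq> G"
  unfolding light_edges_def using sampled_neighbourD by blast

lemma light_edge_known: "{a, b} \<in> G \<Longrightarrow> card (sampled_neighbours sampled_pairs a) < s \<Longrightarrow> {a, b} \<in> Ls"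
proof -
  assume e: "{a, b} \<in> G" and l: "card (sampled_neighbours sampled_pairs a) < s"
  have a: "a < n" using all_edges_memD[OF G_subset e] by simp
  have "b \<in> sampled_neighbours sampled_pairs a" using light_neighbour_sampled[OF a l e] .
  then show ?thesis unfolding light_edges_def using a l by blast
qed

lemma hitting_sources_props:
  assumes "s \<le> n" and "real n * (1 - real s / real n) ^ t < 1"
  shows "hitting_sources n s t sampled_pairs \<subseteq> {..<n} \<and> card (hitting_sources n s t sampled_pairs) \<le> t \<and>
     (\<forall>v<n. s \<le> card (sampled_neighbours sampled_pairs v) \<longrightarrow>
        hitting_sources n s t sampled_pairs \<inter> sampled_neighbours sampled_pairs v \<noteq> {})"
proof -
  have "\<forall>v<n. sampled_neighbours sampled_pairs v \<subseteq> {..<n}" using sampled_neighbours_subset by blast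
  from hitting_set_heavy[OF this assms(1) n0 assms(2)]
  have "\<exists>S. S \<subseteq> {..<n} \<and> card S \<le> t \<and>
      (\<forall>v<n. s \<le> card (sampled_neighbours sampled_pairs v) \<longrightarrow> S \<inter> sampled_neighbours sampled_pairs v \<noteq> {})"
    by blast
  then show ?thesis unfolding hitting_sources_def by (rule someI_ex)
qed

definition finished_bfs :: "nat \<times> nat set list \<Rightarrow> bool" where
  "finished_bfs p \<longleftrightarrow> (\<exists>D. snd p = bfs_layers (fst p) D \<and> layer G n (fst p) (Suc D) = {})"

lemma layers_dist_finished_bfs:
  "finished_bfs p \<Longrightarrow> u < n \<Longrightarrow> layers_dist (snd p) u = gdist G (fst p) u"
  unfolding finished_bfs_def bfs_layers_def using layers_dist_eq_gdist[OF G_subset] by blast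

lemma start_bfs_Cons: "w < n \<Longrightarrow> start_bfs n (x 0) Ls (w # ws) dn = bfs_state Ls ws w 0 dn"
  using layer_0[of w n G] by (simp add: start_bfs_def bfs_state_def bfs_layers_0)

lemma bfs_potential_0: "w < n \<Longrightarrow> bfs_potential w 0 \<le> 7 * n + 5"
  using card_beyond_le[of w "Suc 0"] layer_0[of w n G]
  by (simp add: bfs_potential_def previous_layer_bfs_layers)

lemma bfs_from_sources:
  assumes "\<forall>w\<in>set ws. w < n"
  shows "\<exists>L dn'. diam_rounds n k s t x (start_bfs n (x 0) Ls ws dn) L (Done (diameter_estimate n Ls dn'))
     \<and> fst ` set dn' = fst ` set dn \<union> set ws \<and> (\<forall>p\<in>set dn'. p \<in> set dn \<or> finished_bfs p)
     \<and> rounds_ok k W L \<and> rounds_size L \<le> length ws * ((k - 1) * (7 * n + 5))"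
  using assms
proof (induction ws arbitrary: dn)
  case Nil
  show ?case by (intro exI[of _ "[]"] exI[of _ dn]) (simp add: start_bfs_def rounds_steps.Nil)
next
  case (Cons w ws)
  have wn: "w < n" using Cons.prems by simp
  obtain L1 D where L1: "diam_rounds n k s t x (bfs_state Ls ws w 0 dn) L1
      (start_bfs n (x 0) Ls ws ((w, bfs_layers w D) # dn))" "layer G n w (Suc D) = {}" "rounds_ok k W L1"
      "rounds_size L1 \<le> (k - 1) * bfs_potential w 0"
    using bfs_steps layer_0[OF wn] by (metis empty_not_insert)
  have size1: "rounds_size L1 \<le> (k - 1) * (7 * n + 5)"
    using L1(4) bfs_potential_0[OF wn] by (meson mult_le_mono2 order_trans)
  obtain L2 dn' where L2: "diam_rounds n k s t x (start_bfs n (x 0) Ls ws ((w, bfs_layers w D) # dn)) L2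
      (Done (diameter_estimate n Ls dn'))"
     "fst ` set dn' = fst ` set ((w, bfs_layers w D) # dn) \<union> set ws"
     "\<forall>p\<in>set dn'. p \<in> set ((w, bfs_layers w D) # dn) \<or> finished_bfs p"
     "rounds_ok k W L2" "rounds_size L2 \<le> length ws * ((k - 1) * (7 * n + 5))"
    using Cons.IH[of "(w, bfs_layers w D) # dn"] Cons.prems by auto
  have "finished_bfs (w, bfs_layers w D)" using L1(2) by (auto simp: finished_bfs_def)
  then show ?case using L2(2-5) L1(3) size1 rounds_steps_append[OF L1(1) L2(1)] start_bfs_Cons[OF wn]
    by (intro exI[of _ "L1 @ L2"] exI[of _ dn']) auto
qed

definition sampling_rounds :: "round list" where
  "sampling_rounds = map (\<lambda>i. (i, [], neighbour_codes n s (x i))) [1..<k]"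

lemma sampling_rounds_steps:
  "diam_rounds n k s t x (coord_init n s (x 0)) sampling_rounds (start_bfs_phase n s t (x 0) sampled_pairs)"
proof -
  have "{..<k} = insert 0 {1..<k}" using k2 by auto
  then have "decode_pairs n (neighbour_codes n s (x 0)) \<union> (\<Union>i\<in>{1..<k}. decode_pairs n (neighbour_codes n s (x i)))
      = sampled_pairs"
    by (simp add: sampled_pairs_def)
  moreover have "diam_rounds n k s t x (Sampling (x 0) 1 (decode_pairs n (neighbour_codes n s (x 0)))) sampling_rounds
     (start_bfs_phase n s t (x 0) (decode_pairs n (neighbour_codes n s (x 0))
        \<union> (\<Union>i\<in>{1..<k}. decode_pairs n (neighbour_codes n s (x i)))))"
    unfolding sampling_rounds_def using k2 by (intro sampling_phase_steps) auto
  ultimately show ?thesis by (simp add: coord_init_def)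
qed

lemma rounds_size_sampling_rounds: "rounds_size sampling_rounds \<le> (k - 1) * (2 + n * s)"
  using rounds_size_map_le[of "[1..<k]" "\<lambda>i. (i, [], neighbour_codes n s (x i))" "2 + n * s"]
    length_neighbour_codes
  by (simp add: sampling_rounds_def)

lemma rounds_ok_sampling_rounds: "rounds_ok k W sampling_rounds"
proof -
  have "c < 2 ^ W" if "c \<in> set (neighbour_codes n s E)" for c E
    using neighbour_codes_less[OF that] Wb by linarith
  then show ?thesis unfolding rounds_ok_def sampling_rounds_def by auto
qed

lemma bfs_phase_run:
  assumes "s \<le> n" and "real n * (1 - real s / real n) ^ t < 1"
  shows "\<exists>L dn. diam_rounds n k s t x (start_bfs_phase n s t (x 0) sampled_pairs) L (Done (diameter_estimate n Ls dn))
    \<and> rounds_ok k W L \<and> rounds_size L \<le> t * ((k - 1) * (7 * n + 5)) \<and> (\<forall>p\<in>set dn. finished_bfs p)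
    \<and> (\<forall>y<n. \<not> card (sampled_neighbours sampled_pairs y) < s \<longrightarrow> (\<exists>p\<in>set dn. {y, fst p} \<in> G))"
proof -
  define S where "S = hitting_sources n s t sampled_pairs"
  have S: "S \<subseteq> {..<n}" "card S \<le> t"
    "\<forall>v<n. s \<le> card (sampled_neighbours sampled_pairs v) \<longrightarrow> S \<inter> sampled_neighbours sampled_pairs v \<noteq> {}"
    using hitting_sources_props[OF assms] unfolding S_def by auto
  have fin: "finite S" using S(1) finite_subset by blast
  obtain L dn where L: "diam_rounds n k s t x (start_bfs n (x 0) Ls (sorted_list_of_set S) []) L
      (Done (diameter_estimate n Ls dn))" "fst ` set dn = S" "\<forall>p\<in>set dn. finished_bfs p"
     "rounds_ok k W L" "rounds_size L \<le> length (sorted_list_of_set S) * ((k - 1) * (7 * n + 5))"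
    using bfs_from_sources[of "sorted_list_of_set S" "[]"] S(1) fin by auto
  have "rounds_size L \<le> t * ((k - 1) * (7 * n + 5))"
    using L(5) S(2) fin by (metis length_sorted_list_of_set mult_le_mono1 order_trans)
  moreover have "\<exists>p\<in>set dn. {y, fst p} \<in> G"
    if heavy: "y < n" "\<not> card (sampled_neighbours sampled_pairs y) < s" for y
  proof -
    obtain w where w: "w \<in> S" "w \<in> sampled_neighbours sampled_pairs y" using S(3) heavy by fastforce
    then obtain p where "p \<in> set dn" "fst p = w" using L(2) by blast
    then show ?thesis using sampled_neighbourD[OF w(2)] by blast
  qed
  ultimately show ?thesis
    using L(1,3,4) by (intro exI[of _ L] exI[of _ dn]) (simp add: start_bfs_phase_def S_def)
qed

lemma coordinator_run:
  assumes "s \<le> n" and "real n * (1 - real s / real n) ^ t < 1"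
  shows "\<exists>L out. diam_rounds n k s t x (coord_init n s (x 0)) L (Done out) \<and> rounds_ok k W L
    \<and> rounds_size L \<le> (k - 1) * (2 + n * s) + t * ((k - 1) * (7 * n + 5))
    \<and> diameter n G \<le> out \<and> out \<le> diameter n G + 2"
proof -
  obtain L dn where L: "diam_rounds n k s t x (start_bfs_phase n s t (x 0) sampled_pairs) L
      (Done (diameter_estimate n Ls dn))" "rounds_ok k W L" "rounds_size L \<le> t * ((k - 1) * (7 * n + 5))"
    "\<forall>p\<in>set dn. finished_bfs p"
    and heavy: "\<forall>y<n. \<not> card (sampled_neighbours sampled_pairs y) < s \<longrightarrow> (\<exists>p\<in>set dn. {y, fst p} \<in> G)"
    using bfs_phase_run[OF assms] by blast
  have light: "\<forall>a b. {a, b} \<in> G \<longrightarrow> card (sampled_neighbours sampled_pairs a) < s \<longrightarrow> {a, b} \<in> Ls"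
    using light_edge_known by blast
  have "\<forall>p\<in>set dn. \<forall>u<n. layers_dist (snd p) u = gdist G (fst p) u"
    using L(4) layers_dist_finished_bfs by blast
  note bounds = diameter_estimate_bounds[OF G_subset light_edges_subset light heavy this]
  show ?thesis
    using rounds_steps_append[OF sampling_rounds_steps L(1)] rounds_ok_sampling_rounds L(2)
      rounds_size_sampling_rounds L(3) bounds
    by (intro exI[of _ "sampling_rounds @ L"] exI[of _ "diameter_estimate n Ls dn"]) auto
qed

end


section \<open>Choice of parameters\<close>

text \<open>Sample size \<open>s \<approx> \<surd>n\<close> and \<open>t \<approx> \<surd>n ln n\<close> sources, so that \<open>n (1 - s/n)^t < 1\<close>; numbers below
  \<open>2n + n\<^sup>2\<close> fit into words of \<open>W = O(log n)\<close> bits.\<close>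

definition sample_size :: "nat \<Rightarrow> nat" where "sample_size n = nat \<lceil>sqrt (real n)\<rceil>"
definition num_sources :: "nat \<Rightarrow> nat" where "num_sources n = nat \<lceil>sqrt (real n) * ln (real n)\<rceil> + 1"
definition word_size :: "nat \<Rightarrow> nat" where "word_size n = 2 * ceillog2 (Suc n)"

lemma word_size_suffices: "2 * n + n * n \<le> 2 ^ word_size n"
proof -
  have "Suc n \<le> 2 ^ ceillog2 (Suc n)" using le_two_power_ceillog2[of "Suc n"] by simp
  then have "Suc n * Suc n \<le> 2 ^ ceillog2 (Suc n) * 2 ^ ceillog2 (Suc n)" using mult_le_mono by blast
  also have "\<dots> = 2 ^ word_size n" by (simp add: word_size_def power_add[symmetric] mult_2)
  finally show ?thesis by simp
qed

lemma sample_size_bounds: "sqrt (real n) \<le> real (sample_size n)" "real (sample_size n) \<le> sqrt (real n) + 1"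
proof -
  show "sqrt (real n) \<le> real (sample_size n)" unfolding sample_size_def by (rule real_nat_ceiling_ge)
  have "real (sample_size n) = of_int \<lceil>sqrt (real n)\<rceil>" unfolding sample_size_def by simp
  then show "real (sample_size n) \<le> sqrt (real n) + 1" using of_int_ceiling_le_add_one by simp
qed

lemma sample_size_le: "1 \<le> n \<Longrightarrow> sample_size n \<le> n"
proof -
  assume "1 \<le> n"
  then have "real n \<le> real n * real n" by (simp add: mult_le_cancel_left1)
  then have "sqrt (real n) \<le> sqrt (real n * real n)" by (rule real_sqrt_le_mono)
  then have h: "sqrt (real n) \<le> real n" by simp
  show ?thesis unfolding sample_size_def using h by (simp add: ceiling_le_iff nat_le_iff)
qed

lemma num_sources_bounds:
  assumes "1 \<le> n"
  shows "sqrt (real n) * ln (real n) < real (num_sources n)" "real (num_sources n) \<le> sqrt (real n) * ln (real n) + 2"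
proof -
  have "sqrt (real n) * ln (real n) \<le> real (nat \<lceil>sqrt (real n) * ln (real n)\<rceil>)" by (rule real_nat_ceiling_ge)
  then show "sqrt (real n) * ln (real n) < real (num_sources n)" unfolding num_sources_def by simp
  have nn: "0 \<le> sqrt (real n) * ln (real n)" using assms by simp
  have "real (nat \<lceil>sqrt (real n) * ln (real n)\<rceil>) = of_int \<lceil>sqrt (real n) * ln (real n)\<rceil>"
    using nn by simp
  then show "real (num_sources n) \<le> sqrt (real n) * ln (real n) + 2"
    unfolding num_sources_def using of_int_ceiling_le_add_one[of "sqrt (real n) * ln (real n)"] by simp linarith
qed

lemma hitting_bound:
  assumes n2: "2 \<le> n"
  shows "real n * (1 - real (sample_size n) / real n) ^ num_sources n < 1"
proof -
  let ?y = "real (sample_size n) / real n"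
  have npos: "0 < real n" using n2 by simp
  have y0: "0 \<le> ?y" by simp
  have y1: "?y \<le> 1" using sample_size_le[of n] n2 by (simp add: divide_le_eq_1)
  have "(1 - ?y) ^ num_sources n \<le> exp (- ?y) ^ num_sources n"
    using y1 exp_ge_add_one_self[of "- ?y"] by (intro power_mono) auto
  also have "\<dots> = exp (- (?y * real (num_sources n)))"
    by (simp add: exp_of_nat_mult[symmetric] mult.commute)
  also have "\<dots> < exp (- ln (real n))"
  proof -
    have sq: "sqrt (real n) * sqrt (real n) = real n" by simp
    have sqp: "0 < sqrt (real n)" using npos by simp
    have "real n * ln (real n) = sqrt (real n) * (sqrt (real n) * ln (real n))"
      using sq by (simp add: mult.assoc[symmetric])
    also have "\<dots> < sqrt (real n) * real (num_sources n)" using num_sources_bounds(1)[of n] n2 sqp by simp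
    also have "\<dots> \<le> real (sample_size n) * real (num_sources n)"
      using sample_size_bounds(1)[of n] by (intro mult_right_mono) auto
    finally have "real n * ln (real n) < real (sample_size n) * real (num_sources n)" .
    then have "ln (real n) < ?y * real (num_sources n)" using npos by (simp add: pos_less_divide_eq mult.commute)
    then show ?thesis by simp
  qed
  also have "\<dots> = 1 / real n" using npos by (simp add: exp_minus inverse_eq_divide)
  finally have "(1 - ?y) ^ num_sources n < 1 / real n" .
  then show ?thesis using npos by (simp add: pos_less_divide_eq mult.commute)
qed


lemma cost_bound_real:
  fixes q g K S B Wp N :: real
  assumes q4: "q \<ge> 4" and g4: "g \<ge> 4" and K0: "K \<ge> 0" and N: "N = q * q"
    and S0: "0 \<le> S" and S1: "S \<le> q + 1" and B0: "0 \<le> B" and B1: "B \<le> q * g + 2"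
    and W0: "0 \<le> Wp" and W1: "Wp \<le> 4 * g"
  shows "Wp * (K * (2 + N * S) + B * (K * (7 * N + 5))) \<le> 72 * K * N * q * g ^ 2"
proof -
  have N16: "N \<ge> 16" using q4 N mult_mono[OF q4 q4] by linarith
  have "N * 4 \<le> N * q" by (rule mult_left_mono[OF q4]) (use N16 in simp)
  then have Nq: "N * q \<ge> 4 * N" by simp
  have "N * q * 1 \<le> N * q * g" by (rule mult_left_mono) (use g4 Nq N16 in auto)
  then have Nqg: "N * q * g \<ge> N * q" by simp
  have A: "2 + N * S \<le> 2 * (N * q * g)"
  proof -
    have "N * S \<le> N * (q + 1)" using S1 N16 by (intro mult_left_mono) auto
    then have h: "N * S \<le> N * q + N" by (simp add: algebra_simps)
    show ?thesis using h Nq Nqg N16 by linarith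
  qed
  have qg: "q * g \<ge> 16" using mult_mono[OF q4 g4] q4 by simp
  have Bnd: "B * (7 * N + 5) \<le> 16 * (N * q * g)"
  proof -
    have "B * (7 * N + 5) \<le> (q * g + 2) * (7 * N + 5)" using B1 N16 by (intro mult_right_mono) auto
    also have "\<dots> \<le> (2 * (q * g)) * (8 * N)" by (intro mult_mono) (use qg N16 in linarith)+
    also have "\<dots> = 16 * (N * q * g)" by (simp add: algebra_simps)
    finally show ?thesis .
  qed
  have inner: "K * (2 + N * S) + B * (K * (7 * N + 5)) \<le> 18 * K * (N * q * g)"
  proof -
    have "K * (2 + N * S) \<le> K * (2 * (N * q * g))" using A K0 by (rule mult_left_mono)
    moreover have "K * (B * (7 * N + 5)) \<le> K * (16 * (N * q * g))" using Bnd K0 by (rule mult_left_mono)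
    ultimately show ?thesis by (simp add: algebra_simps)
  qed
  have inn0: "0 \<le> K * (2 + N * S) + B * (K * (7 * N + 5))" using K0 S0 B0 N16 by simp
  have "Wp * (K * (2 + N * S) + B * (K * (7 * N + 5))) \<le> (4 * g) * (18 * K * (N * q * g))"
    using W1 inner W0 inn0 g4 by (intro mult_mono) auto
  also have "\<dots> = 72 * K * N * q * g ^ 2" by (simp add: algebra_simps power2_eq_square)
  finally show ?thesis .
qed

lemma logs_ge_16:
  assumes n: "16 \<le> n"
  shows "4 \<le> sqrt (real n)" "4 \<le> log 2 (real n)" "ln (real n) \<le> log 2 (real n)"
    "real (word_size n) + 1 \<le> 4 * log 2 (real n)"
proof -
  have rn: "16 \<le> real n" using n by simp
  show "4 \<le> sqrt (real n)" by (rule real_le_rsqrt) (use rn in simp)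
  have "log 2 16 \<le> log 2 (real n)" using rn by (subst log_le_cancel_iff) auto
  moreover have "log 2 (16::real) = 4"
  proof -
    have "(16::real) = 2 ^ 4" by simp
    then have "log 2 (16::real) = log 2 (2 ^ 4)" by simp
    also have "\<dots> = 4 * log 2 2" by (subst log_nat_power) auto
    finally show ?thesis by simp
  qed
  ultimately show lg4: "4 \<le> log 2 (real n)" by simp
  have ln2: "0 < ln (2::real)" "ln (2::real) < 1" using ln_2_less_1 by auto
  have lnn: "0 \<le> ln (real n)" using rn by simp
  have "ln (real n) * ln 2 \<le> ln (real n)" using ln2 lnn by (simp add: mult_left_le)
  then show "ln (real n) \<le> log 2 (real n)" unfolding log_def using ln2 by (simp add: le_divide_eq)
  have c: "real (ceillog2 (Suc n)) < log 2 (real (Suc n)) + 1" by (rule ceillog2_less_log) simp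
  have "log 2 (real (Suc n)) \<le> log 2 (2 * real n)" using rn by (subst log_le_cancel_iff) auto
  also have "\<dots> = 1 + log 2 (real n)" using rn by (simp add: log_mult)
  finally have "real (ceillog2 (Suc n)) < log 2 (real n) + 2" using c by simp
  then show "real (word_size n) + 1 \<le> 4 * log 2 (real n)" unfolding word_size_def using lg4 by simp
qed

lemma cost_bound:
  assumes n: "16 \<le> n" and k: "1 \<le> k"
  shows "real ((word_size n + 1) * ((k - 1) * (2 + n * sample_size n) + num_sources n * ((k - 1) * (7 * n + 5))))
     \<le> 72 * real k * real n powr (3/2) * (log 2 (real n))^2"
proof -
  note f = logs_ge_16[OF n]
  let ?q = "sqrt (real n)" and ?g = "log 2 (real n)"
  let ?C = "real (word_size n + 1)
    * (real (k - 1) * (2 + real n * real (sample_size n)) + real (num_sources n) * (real (k - 1) * (7 * real n + 5)))"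
  have N: "real n = ?q * ?q" by simp
  have T1: "real (num_sources n) \<le> ?q * ?g + 2"
  proof -
    have "?q * ln (real n) \<le> ?q * ?g" using f(3) by (intro mult_left_mono) auto
    moreover have "real (num_sources n) \<le> ?q * ln (real n) + 2"
      using num_sources_bounds(2)[of n] n by simp
    ultimately show ?thesis by linarith
  qed
  have main: "?C \<le> 72 * real (k - 1) * real n * ?q * ?g ^ 2"
    by (rule cost_bound_real[OF f(1) f(2) _ N _ sample_size_bounds(2) _ T1 _]) (use f(4) in auto)
  have p: "real n powr (3/2) = real n * ?q"
  proof -
    have "real n powr (3/2) = real n powr (1 + 1/2)" by simp
    also have "\<dots> = real n powr 1 * real n powr (1/2)" by (rule powr_add)
    also have "\<dots> = real n * real n powr (1/2)" using n by simp
    also have "\<dots> = real n * ?q" by (simp add: powr_half_sqrt)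
    finally show ?thesis .
  qed
  have "72 * real (k - 1) * real n * ?q * ?g ^ 2 \<le> 72 * real k * real n * ?q * ?g ^ 2"
    by (intro mult_right_mono) auto
  then have pr: "?C \<le> 72 * real k * real n powr (3/2) * ?g ^ 2"
    using main p by (simp add: mult.assoc)
  have eq: "real ((word_size n + 1) * ((k - 1) * (2 + n * sample_size n) + num_sources n * ((k - 1) * (7 * n + 5))))
     = ?C"
    by (simp only: of_nat_mult of_nat_add of_nat_numeral)
  show ?thesis unfolding eq by (rule pr)
qed


definition approximates_diameter_within :: "nat \<Rightarrow> nat \<Rightarrow> real \<Rightarrow> (nat set set, enat) protocol \<Rightarrow> bool" where
  "approximates_diameter_within k n B P \<longleftrightarrow> (\<forall>x. (\<forall>i<k. x i \<subseteq> all_edges n) \<longrightarrow> (\<forall>r. \<exists>f tr out.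
     run P x r f = Some (tr, out) \<and> valid_transcript k tr \<and> real (cost tr) \<le> B
     \<and> diameter n (\<Union>i<k. x i) \<le> out \<and> out \<le> diameter n (\<Union>i<k. x i) + 2))"

lemma approximates_diameter_within_mono:
  "approximates_diameter_within k n B P \<Longrightarrow> B \<le> B' \<Longrightarrow> approximates_diameter_within k n B' P"
  unfolding approximates_diameter_within_def by (meson order_trans)

lemma single_site_approximates_diameter:
  "approximates_diameter_within 1 n 0 (\<lambda>h inp r vw. Inr (diameter n inp))"
  unfolding approximates_diameter_within_def
proof (intro allI impI)
  fix x :: "nat \<Rightarrow> nat set set" and r
  have "(\<Union>i<1. x i) = x 0" by auto
  then have "run (\<lambda>h inp r vw. Inr (diameter n inp)) x r 1 = Some ([], diameter n (\<Union>i<1. x i))"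
    by (simp add: run_def)
  then show "\<exists>f tr out. run (\<lambda>h inp r vw. Inr (diameter n inp)) x r f = Some (tr, out) \<and> valid_transcript 1 tr
    \<and> real (cost tr) \<le> 0 \<and> diameter n (\<Union>i<1. x i) \<le> out \<and> out \<le> diameter n (\<Union>i<1. x i) + 2"
    by (force simp: valid_transcript_def cost_def)
qed

lemma coordinator_approximates_diameter:
  assumes k: "2 \<le> k" and n: "16 \<le> n"
  shows "approximates_diameter_within k n (72 * real k * real n powr (3/2) * (log 2 (real n))^2)
    (coordinator_protocol (coord_next n) (coord_update n k (sample_size n) (num_sources n))
       (coord_init n (sample_size n)) (site_reply n (sample_size n)) (word_size n))"
  unfolding approximates_diameter_within_def
proof (intro allI impI)
  fix x :: "nat \<Rightarrow> nat set set" and r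
  assume "\<forall>i<k. x i \<subseteq> all_edges n"
  then interpret diam_setting n k "sample_size n" "num_sources n" "word_size n" x
    using k n word_size_suffices[of n] by unfold_locales auto
  have "sample_size n \<le> n" using sample_size_le[of n] n by simp
  moreover have "real n * (1 - real (sample_size n) / real n) ^ num_sources n < 1"
    using hitting_bound[of n] n by simp
  ultimately obtain L out where
    L: "diam_rounds n k (sample_size n) (num_sources n) x (coord_init n (sample_size n) (x 0)) L (Done out)"
      "rounds_ok k (word_size n) L"
      "rounds_size L \<le> (k - 1) * (2 + n * sample_size n) + num_sources n * ((k - 1) * (7 * n + 5))"
      "diameter n G \<le> out" "out \<le> diameter n G + 2"
    using coordinator_run by blast
  have "cost (rounds_transcript (word_size n) L) \<le> (word_size n + 1) * rounds_size L"
    by (rule cost_rounds_transcript)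
  also have "\<dots> \<le> (word_size n + 1) * ((k - 1) * (2 + n * sample_size n) + num_sources n * ((k - 1) * (7 * n + 5)))"
    using L(3) by (rule mult_le_mono2)
  finally have "real (cost (rounds_transcript (word_size n) L))
      \<le> 72 * real k * real n powr (3/2) * (log 2 (real n))^2"
    using cost_bound[OF n, of k] k by (meson of_nat_le_iff order_trans one_le_numeral order.trans)
  moreover have "run (coordinator_protocol (coord_next n) (coord_update n k (sample_size n) (num_sources n))
      (coord_init n (sample_size n)) (site_reply n (sample_size n)) (word_size n)) x r (2 * length L + 1)
    = Some (rounds_transcript (word_size n) L, out)"
    using run_coordinator_protocol[where ini="coord_init n (sample_size n)", OF L(1) _ L(2)] by simp
  ultimately show "\<exists>f tr out. run (coordinator_protocol (coord_next n) (coord_update n k (sample_size n) (num_sources n))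
       (coord_init n (sample_size n)) (site_reply n (sample_size n)) (word_size n)) x r f = Some (tr, out)
     \<and> valid_transcript k tr \<and> real (cost tr) \<le> 72 * real k * real n powr (3/2) * (log 2 (real n))^2
     \<and> diameter n (\<Union>i<k. x i) \<le> out \<and> out \<le> diameter n (\<Union>i<k. x i) + 2"
    using valid_transcript_rounds_transcript[OF L(2)] L(4,5) unfolding G_def by blast
qed

text \<open>No random bits are needed: the protocol is deterministic and always succeeds.\<close>

lemma approximation_protocol_exists:
  assumes P: "approximates_diameter_within k n B P"
  shows "\<exists>(P :: (nat set set, enat) protocol) (R :: nat).
      \<forall>x :: nat \<Rightarrow> nat set set. (\<forall>i<k. x i \<subseteq> all_edges n) \<longrightarrow>
        (\<forall>r \<in> rand_space k R. \<exists>f tr out. run P x r f = Some (tr, out)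
             \<and> valid_transcript k tr \<and> real (cost tr) \<le> B)
        \<and> real (card {r \<in> rand_space k R. \<exists>f tr out. run P x r f = Some (tr, out)
             \<and> diameter n (\<Union>i<k. x i) \<le> out \<and> out \<le> diameter n (\<Union>i<k. x i) + 2})
          \<ge> 0.99 * real (card (rand_space k R))"
proof (intro exI[of _ P] exI[of _ 0] allI impI)
  fix x :: "nat \<Rightarrow> nat set set"
  assume "\<forall>i<k. x i \<subseteq> all_edges n"
  then have good: "\<forall>r. \<exists>f tr out. run P x r f = Some (tr, out) \<and> valid_transcript k tr \<and> real (cost tr) \<le> B
     \<and> diameter n (\<Union>i<k. x i) \<le> out \<and> out \<le> diameter n (\<Union>i<k. x i) + 2"
    using P unfolding approximates_diameter_within_def by blast
  then have all: "{r \<in> rand_space k 0. \<exists>f tr out. run P x r f = Some (tr, out)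
      \<and> diameter n (\<Union>i<k. x i) \<le> out \<and> out \<le> diameter n (\<Union>i<k. x i) + 2} = rand_space k 0"
    by blast
  show "(\<forall>r \<in> rand_space k 0. \<exists>f tr out. run P x r f = Some (tr, out)
             \<and> valid_transcript k tr \<and> real (cost tr) \<le> B)
        \<and> real (card {r \<in> rand_space k 0. \<exists>f tr out. run P x r f = Some (tr, out)
             \<and> diameter n (\<Union>i<k. x i) \<le> out \<and> out \<le> diameter n (\<Union>i<k. x i) + 2})
          \<ge> 0.99 * real (card (rand_space k 0))"
    using good unfolding all by (simp, meson)
qed

theorem theorem6p11:
  shows "\<exists>C::real. \<exists>N0::nat. \<forall>k n. k \<ge> 1 \<longrightarrow> n \<ge> N0 \<longrightarrow>
    (\<exists>(P :: (nat set set, enat) protocol) (R :: nat).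
      \<forall>x :: nat \<Rightarrow> nat set set. (\<forall>i<k. x i \<subseteq> all_edges n) \<longrightarrow>
        (\<forall>r \<in> rand_space k R. \<exists>f tr out. run P x r f = Some (tr, out)
             \<and> valid_transcript k tr
             \<and> real (cost tr) \<le> C * real k * real n powr (3/2) * (log 2 (real n))^2)
        \<and> real (card {r \<in> rand_space k R. \<exists>f tr out. run P x r f = Some (tr, out)
             \<and> diameter n (\<Union>i<k. x i) \<le> out \<and> out \<le> diameter n (\<Union>i<k. x i) + 2})
          \<ge> 0.99 * real (card (rand_space k R)))"
proof -
  have "\<exists>P. approximates_diameter_within k n (72 * real k * real n powr (3/2) * (log 2 (real n))^2) P"
    if k: "1 \<le> k" and n: "16 \<le> n" for k n
  proof (cases "k = 1")
    case True
    have "0 \<le> 72 * real k * real n powr (3/2) * (log 2 (real n))^2" by simp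
    then show ?thesis
      using approximates_diameter_within_mono[OF single_site_approximates_diameter] True by blast
  next
    case False
    then have "2 \<le> k" using k by simp
    then show ?thesis using coordinator_approximates_diameter n by blast
  qed
  then show ?thesis
    using approximation_protocol_exists by (intro exI[of _ "72::real"] exI[of _ "16::nat"]) blast
qed

end
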